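(* Let $N\geq 2$ and $\theta\in\Theta$. Suppose $(X_{1:T},\mathbf{S}_{1},\dots,\mathbf{S}_{T})$ is distributed according to $\pi_{\theta}^{N}$, and run the backward sampling procedure (described in the context) on $\mathbf{S}_1,\dots,\mathbf{S}_T$. For any step $m\in\{T,T-1,\dots,1\}$ of the procedure, let $X'_{1:T}$ be the trajectory obtained at step $m$, i.e. $X'_{1:T}=(X'_{1:m},X'_{m+1:T})$ where $X'_{1:m}$ is the path drawn from $\mathbf{S}_m$ at step $m$ and $X'_{m+1:T}$ the components retained at the earlier steps. Then $X'_{1:T}$ is distributed according to $p_{\theta}(x_{1:T}|y_{1:T})$.
   Context: Model: $\mathcal{X}=\{1,\dots,|\mathcal{X}|\}$ is a finite set; each $\mathcal{X}^n$ is ordered lexicographically; $\mathcal{P}(\mathcal{X}^n)$ denotes the set of subsets of $\mathcal{X}^n$. $\Theta$ is a parameter space with prior density $p(\theta)$. For each $\theta\in\Theta$, a latent discrete process satisfies $X_1\sim\nu_\theta$ and $X_n|(X_{1:n-1}=x_{1:n-1})\sim f_\theta(\cdot|x_{1:n-1})$; conditional on $X_{1:T}=x_{1:T}$, $Z_0\sim\mathcal{N}(m_0,\Sigma_0)$, $Z_n=A_\theta(X_n)Z_{n-1}+B_\theta(X_n)V_n+F_\theta(X_n)u_n$, $Y_n=C_\theta(X_n)Z_n+D_\theta(X_n)W_n+G_\theta(X_n)u_n$, with $V_n,W_n$ i.i.d. standard Gaussian vectors, given matrices and known inputs $u_n$. Observations $y_{1:T}$ are fixed. $g_\theta(y_n|y_{1:n-1},x_{1:n})$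 denotes the conditional predictive density of $Y_n$ given $y_{1:n-1}$ and $X_{1:n}=x_{1:n}$ (with $g_\theta(y_1|x_1)$ for $n=1$); $p_\theta(x_{1:n}|y_{1:n})$, $p_\theta(x_{n+1:T}|x_{1:n})$, $p_\theta(y_{n+1:T}|y_{1:n},x_{1:T})$ and $p(\theta,x_{1:T}|y_{1:T})\propto p(\theta)p_\theta(x_{1:T})p_\theta(y_{1:T}|x_{1:T})$ are the corresponding conditional densities. Standing assumption: for every $n\le T$ and $\theta$, the support of $p_\theta(x_{1:n}|y_{1:n})$ is all of $\mathcal{X}^n$. Discrete particle filter (DPF) with parameter $N$ at $\theta$: set $\mathbf{S}_1=\mathcal{X}$, $\overline{w}_1^\theta(x_1)=\nu_\theta(x_1)g_\theta(y_1|x_1)$, $W_1^\theta$ its normalisation over $\mathcal{X}$. For $n=2,\dots,T$: if $|\mathbf{S}_{n-1}|\le N$ set $C_{n-1}=\infty$, otherwise let $C_{n-1}$ be the unique solution of $\sum_{x_{1:n-1}\in\mathbf{S}_{n-1}}1\wedge C_{n-1}W_{n-1}^\theta(x_{1:n-1})=N$. Keep the $L_{n-1}$ trajectories of $\mathbf{S}_{n-1}$ with weight strictly greater than $1/C_{n-1}$; apply stratified resampling to the remaining trajectories to obtain $N-L_{n-1}$ survivors: normalise their weights, label them $x^{(1)},x^{(2)},\dots$ in lexicographic order with normalised weights $\widehat W(x^{(i)})$, let $Q(i)=\sum_{j\le i}\widehat W(x^{(j)})$, $Q(0)=0$, draw $U_1$ uniform on $[0,1/(N-L_{n-1})]$,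 set $U_j=U_1+(j-1)/(N-L_{n-1})$, and let $x^{(i)}$ survive iff $Q(i-1)<U_j\le Q(i)$ for some $j$. Let $\mathbf{S}'_{n-1}$ be the kept and surviving trajectories, $\mathbf{S}_n=\mathbf{S}'_{n-1}\times\mathcal{X}$, and for $x_{1:n}\in\mathbf{S}_n$, $\overline{w}_n^\theta(x_{1:n})=f_\theta(x_n|x_{1:n-1})g_\theta(y_n|y_{1:n-1},x_{1:n})\frac{W^\theta_{n-1}(x_{1:n-1})}{1\wedge C_{n-1}W^\theta_{n-1}(x_{1:n-1})}$, $W_n^\theta$ its normalisation over $\mathbf{S}_n$; weights are set to $0$ outside $\mathbf{S}_n$. The weights $\mathbf{w}^\theta_n=\{w^\theta_n(x_{1:n})\}$ are deterministic functions of $\mathbf{s}_1,\dots,\mathbf{s}_n$. Let $r_n^N(\cdot|\mathbf{w}^\theta_{n-1})$ be the conditional law of $\mathbf{S}_n$ given $\mathbf{W}^\theta_{n-1}=\mathbf{w}^\theta_{n-1}$ ($r_1^N$ the point mass at $\mathcal{X}$), which satisfies $r_n^N(x_{1:n}\in\mathbf{s}_n|\mathbf{w}^\theta_{n-1}):=\sum_{\mathbf{s}_n'\ni x_{1:n}}r_n^N(\mathbf{s}'_n|\mathbf{w}^\theta_{n-1})=1\wedge C_{n-1}w^\theta_{n-1}(x_{1:n-1})$; the joint law of the supports is $\psi^N_\theta(\mathbf{s}_1,\dots,\mathbf{s}_T)=r_1^N(\mathbf{s}_1)\prod_{n=2}^T r_n^N(\mathbf{s}_n|\mathbf{w}^\theta_{n-1})$.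 Extended target: $\pi^N(\theta,x_{1:T},\mathbf{s}_1,\dots,\mathbf{s}_T)=p(\theta,x_{1:T}|y_{1:T})\Big\{\prod_{n=2}^T\mathbb{I}[x_{1:n}\in\mathbf{s}_n]\Big\}\frac{\psi^N_\theta(\mathbf{s}_1,\dots,\mathbf{s}_T)}{\prod_{n=2}^T r_n^N(x_{1:n}\in\mathbf{s}_n|\mathbf{w}^\theta_{n-1})}$, and $\pi^N_\theta(x_{1:T},\mathbf{s}_1,\dots,\mathbf{s}_T)$ denotes its conditional density given $\theta$. Backward sampling on $\mathbf{s}_1,\dots,\mathbf{s}_T$ (with the associated weights $W^\theta_n$): at step $n=T$, draw a path $X^\ast_{1:T}$ from the distribution on $\mathbf{s}_T$ with probabilities $W^\theta_T(x_{1:T})$ and set $X'_T=X^\ast_T$ (the trajectory obtained at step $T$ is $X^\ast_{1:T}$). At steps $n=T-1,\dots,1$: given $X'_{n+1:T}$, draw a path $X'_{1:n}$ from the distribution on $\mathbf{s}_n$ with probabilities proportional to $V^\theta_n(x_{1:n}|X'_{n+1:T})=W^\theta_n(x_{1:n})\,p_\theta(X'_{n+1:T}|x_{1:n})\,p_\theta(y_{n+1:T}|y_{1:n},x_{1:n},X'_{n+1:T})$; if $n>1$ retain only its last component $X'_n$, otherwise output $X'_{1:T}$. *)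

theory Defs
  imports "HOL-Analysis.Analysis" "HOL-Library.List_Lexorder"
begin

text \<open>
Conventions (fixed theta throughout; all theta-dependence is absorbed into nu, f, g):
  state space X = {1..K}; a path x_{1:n} is a nat list of length n with entries in {1..K};
  paths are ordered lexicographically (List_Lexorder; lists of equal length);
  nu a       = nu_theta(a);
  f xs a     = f_theta(a | xs)      (xs = x_{1:n-1}, a = x_n);
  g n xs     = g_theta(y_n | y_{1:n-1}, x_{1:n}) with xs = x_{1:n} (observations y fixed);
  supports S_1..S_T are stored in a list ss of length T with ss!(n-1) = S_n.
\<close>

definition paths :: "nat \<Rightarrow> nat \<Rightarrow> nat list set" where
  "paths K n = {xs. length xs = n \<and> set xs \<subseteq> {1..K}}"

definition ext :: "nat \<Rightarrow> nat list set \<Rightarrow> nat list set" where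
  "ext K s = {z @ [a] | z a. z \<in> s \<and> a \<in> {1..K}}"

text \<open>unnormalised filtering density p_theta(x_{1:n}, y_{1:n}) (prefix of x of length n)\<close>
definition joint :: "(nat \<Rightarrow> real) \<Rightarrow> (nat list \<Rightarrow> nat \<Rightarrow> real) \<Rightarrow> (nat \<Rightarrow> nat list \<Rightarrow> real)
   \<Rightarrow> nat \<Rightarrow> nat list \<Rightarrow> real" where
  "joint nu f g n x = nu (x!0) * g 1 (take 1 x) *
     (\<Prod>k\<in>{2..n}. f (take (k-1) x) (x!(k-1)) * g k (take k x))"

definition post :: "nat \<Rightarrow> (nat \<Rightarrow> real) \<Rightarrow> (nat list \<Rightarrow> nat \<Rightarrow> real) \<Rightarrow> (nat \<Rightarrow> nat list \<Rightarrow> real)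
   \<Rightarrow> nat \<Rightarrow> nat list \<Rightarrow> real" where
  "post K nu f g T x = joint nu f g T x / (\<Sum>u\<in>paths K T. joint nu f g T u)"

definition pfut_x :: "(nat list \<Rightarrow> nat \<Rightarrow> real) \<Rightarrow> nat \<Rightarrow> nat \<Rightarrow> nat list \<Rightarrow> real" where
  "pfut_x f T n x = (\<Prod>k\<in>{n+1..T}. f (take (k-1) x) (x!(k-1)))"

definition pfut_y :: "(nat \<Rightarrow> nat list \<Rightarrow> real) \<Rightarrow> nat \<Rightarrow> nat \<Rightarrow> nat list \<Rightarrow> real" where
  "pfut_y g T n x = (\<Prod>k\<in>{n+1..T}. g k (take k x))"

text \<open>The threshold C (when |S| > N): the unique solution of sum_{z in S} 1 /\ C w(z) = N\<close>
definition Cthr :: "nat \<Rightarrow> (nat list \<Rightarrow> real) \<Rightarrow> nat list set \<Rightarrow> real" where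
  "Cthr N w s = (THE c. c > 0 \<and> (\<Sum>z\<in>s. min 1 (c * w z)) = real N)"

text \<open>1 /\ C w(z), with C = infinity (value 1) when |S| <= N\<close>
definition keepp :: "nat \<Rightarrow> (nat list \<Rightarrow> real) \<Rightarrow> nat list set \<Rightarrow> nat list \<Rightarrow> real" where
  "keepp N w s z = (if card s \<le> N then 1 else min 1 (Cthr N w s * w z))"

fun Wt :: "nat \<Rightarrow> nat \<Rightarrow> (nat \<Rightarrow> real) \<Rightarrow> (nat list \<Rightarrow> nat \<Rightarrow> real) \<Rightarrow> (nat \<Rightarrow> nat list \<Rightarrow> real)
   \<Rightarrow> nat list set list \<Rightarrow> nat \<Rightarrow> nat list \<Rightarrow> real" where
  "Wt K N nu f g ss 0 z = 0"
| "Wt K N nu f g ss (Suc 0) z =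
     (if z \<in> paths K 1 then nu (hd z) * g 1 z / (\<Sum>u\<in>paths K 1. nu (hd u) * g 1 u) else 0)"
| "Wt K N nu f g ss (Suc (Suc n)) z =
     (let w = Wt K N nu f g ss (Suc n); s = ss!n; s2 = ss!(Suc n);
          wb = (\<lambda>u. f (butlast u) (last u) * g (Suc (Suc n)) u * w (butlast u) / keepp N w s (butlast u))
      in if z \<in> s2 then wb z / (\<Sum>u\<in>s2. wb u) else 0)"

text \<open>Conditional law r_n^N(s' | w_{n-1}) of S_n given the previous support s = S_{n-1} and
  its weights w = W_{n-1}: keep paths with weight > 1/C, stratified resampling of the rest
  (U_1 uniform on [0, 1/M], M = N - L), then extend by X.\<close>
definition rn :: "nat \<Rightarrow> nat \<Rightarrow> (nat list \<Rightarrow> real) \<Rightarrow> nat list set \<Rightarrow> nat list set \<Rightarrow> real" where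
  "rn K N w s s' =
    (if card s \<le> N then (if s' = ext K s then 1 else 0) else
     (let C = Cthr N w s;
          Kp = {z \<in> s. w z > 1 / C};
          M = real (N - card Kp);
          R = s - Kp;
          xs = sorted_list_of_set R;
          Wh = (\<lambda>z. w z / (\<Sum>u\<in>R. w u));
          Q = (\<lambda>i::nat. \<Sum>j<i. Wh (xs!j));
          surv = (\<lambda>u::real. {xs!i | i. i < length xs \<and>
                     (\<exists>j::nat. real j < M \<and> Q i < u + real j / M \<and> u + real j / M \<le> Q (Suc i))})
      in M * measure lborel {u \<in> {0..1/M}. ext K (Kp \<union> surv u) = s'}))"

definition rin :: "nat \<Rightarrow> nat \<Rightarrow> (nat list \<Rightarrow> real) \<Rightarrow> nat list set \<Rightarrow> nat \<Rightarrow> nat list \<Rightarrow> real" where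
  "rin K N w s n z = (\<Sum>s'\<in>{s'. s' \<subseteq> paths K n \<and> z \<in> s'}. rn K N w s s')"

definition Supps :: "nat \<Rightarrow> nat \<Rightarrow> nat list set list set" where
  "Supps K T = {ss. length ss = T \<and> (\<forall>i<T. ss!i \<subseteq> paths K (Suc i))}"

definition psi :: "nat \<Rightarrow> nat \<Rightarrow> (nat \<Rightarrow> real) \<Rightarrow> (nat list \<Rightarrow> nat \<Rightarrow> real) \<Rightarrow> (nat \<Rightarrow> nat list \<Rightarrow> real)
   \<Rightarrow> nat \<Rightarrow> nat list set list \<Rightarrow> real" where
  "psi K N nu f g T ss = (if ss!0 = paths K 1 then 1 else 0) *
     (\<Prod>n\<in>{2..T}. rn K N (Wt K N nu f g ss (n-1)) (ss!(n-2)) (ss!(n-1)))"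

definition piN :: "nat \<Rightarrow> nat \<Rightarrow> (nat \<Rightarrow> real) \<Rightarrow> (nat list \<Rightarrow> nat \<Rightarrow> real) \<Rightarrow> (nat \<Rightarrow> nat list \<Rightarrow> real)
   \<Rightarrow> nat \<Rightarrow> nat list \<Rightarrow> nat list set list \<Rightarrow> real" where
  "piN K N nu f g T x ss =
     post K nu f g T x *
     (\<Prod>n\<in>{2..T}. if take n x \<in> ss!(n-1) then 1 else 0) *
     psi K N nu f g T ss /
     (\<Prod>n\<in>{2..T}. rin K N (Wt K N nu f g ss (n-1)) (ss!(n-2)) n (take n x))"

definition Vb :: "nat \<Rightarrow> nat \<Rightarrow> (nat \<Rightarrow> real) \<Rightarrow> (nat list \<Rightarrow> nat \<Rightarrow> real) \<Rightarrow> (nat \<Rightarrow> nat list \<Rightarrow> real)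
   \<Rightarrow> nat \<Rightarrow> nat list set list \<Rightarrow> nat \<Rightarrow> nat list \<Rightarrow> nat list \<Rightarrow> real" where
  "Vb K N nu f g T ss n tr z =
     Wt K N nu f g ss n z * pfut_x f T n (z @ tr) * pfut_y g T n (z @ tr)"

text \<open>Probability (given the supports) that the backward sampler retains components
  X'_{T-j+1:T} = tl, for tl of length j \<ge> 1.\<close>
fun btail :: "nat \<Rightarrow> nat \<Rightarrow> (nat \<Rightarrow> real) \<Rightarrow> (nat list \<Rightarrow> nat \<Rightarrow> real) \<Rightarrow> (nat \<Rightarrow> nat list \<Rightarrow> real)
   \<Rightarrow> nat \<Rightarrow> nat list set list \<Rightarrow> nat \<Rightarrow> nat list \<Rightarrow> real" where
  "btail K N nu f g T ss 0 tr = (if tr = [] then 1 else 0)"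
| "btail K N nu f g T ss (Suc 0) tr =
     (\<Sum>z\<in>ss!(T-1). if last z = hd tr then Wt K N nu f g ss T z else 0)"
| "btail K N nu f g T ss (Suc (Suc j)) tr =
     (let n = T - Suc j; rest = tl tr;
          V = Vb K N nu f g T ss n rest
      in btail K N nu f g T ss (Suc j) rest *
         (\<Sum>z\<in>ss!(n-1). if last z = hd tr then V z / (\<Sum>u\<in>ss!(n-1). V u) else 0))"

text \<open>Probability (given the supports) that the trajectory obtained at step m of the
  backward sampler equals x (x of length T).\<close>
definition bsout :: "nat \<Rightarrow> nat \<Rightarrow> (nat \<Rightarrow> real) \<Rightarrow> (nat list \<Rightarrow> nat \<Rightarrow> real) \<Rightarrow> (nat \<Rightarrow> nat list \<Rightarrow> real)
   \<Rightarrow> nat \<Rightarrow> nat list set list \<Rightarrow> nat \<Rightarrow> nat list \<Rightarrow> real" where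
  "bsout K N nu f g T ss m x =
    (if m = T then (if x \<in> ss!(T-1) then Wt K N nu f g ss T x else 0)
     else (let V = Vb K N nu f g T ss m (drop m x)
           in btail K N nu f g T ss (T - m) (drop m x) *
              (if take m x \<in> ss!(m-1) then V (take m x) / (\<Sum>u\<in>ss!(m-1). V u) else 0)))"

end

theory Submission
  imports Defs
begin

text \<open>
  Write \<open>piN_upto n\<close> for the extended target in which only the supports S_1, ..., S_n appear.
  Two facts drive the proof.

  First, the probability that a path x_{1:n+1} belongs to S_{n+1} is exactly 1 /\ C_n W_n(x_{1:n}):
  paths above the threshold are kept, and stratified resampling hits every other path with
  probability proportional to its weight. Hence summing S_{n+1} out of \<open>piN_upto (n+1)\<close> gives
  \<open>piN_upto n\<close>, and summing out all supports leaves the posterior.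

  Second, on supports of positive probability W_n(x_{1:n}) is proportional to
  p(x_{1:n}, y_{1:n}) / prod_{k<n} (1 /\ C_k W_k(x_{1:k})), so \<open>piN_upto n\<close> at x_{1:T} is
  proportional to the backward weight V_n(x_{1:n} | x_{n+1:T}) on S_n: the backward step samples
  from the conditional of \<open>piN_upto n\<close> given x_{n+1:T}.

  A backward induction from m = T then shows that the joint law of S_1, ..., S_m and of the
  trajectory obtained at step m is \<open>piN_upto m\<close>; summing over the supports gives p(x_{1:T} | y_{1:T}).
\<close>

section \<open>Stratified resampling\<close>

text \<open>\<open>clamp h t\<close> is the length of \<open>[0, h] \<inter> (-\<infinity>, t]\<close>.\<close>
definition clamp :: "real \<Rightarrow> real \<Rightarrow> real" where
  "clamp h t = max 0 (min h t)"

lemma sum_clamp_shift: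
  assumes "h > 0"
  shows "(\<Sum>j<m. clamp h (t - real j * h)) = clamp (real m * h) t"
proof (induction m)
  case 0
  then show ?case by (simp add: clamp_def)
next
  case (Suc m)
  have hm: "0 \<le> h * real m" using assms by simp
  have "clamp (real m * h) t + clamp h (t - real m * h) = clamp (real (Suc m) * h) t"
    using assms unfolding clamp_def max_def min_def
    by (auto simp: algebra_simps) (use hm in linarith)+
  then show ?case using Suc by simp
qed

lemma measure_Icc_inter_Ioc:
  fixes h a b :: real
  assumes "h > 0" "a \<le> b"
  shows "measure lborel ({0..h} \<inter> {a<..b}) = clamp h b - clamp h a"
proof (cases "a < 0")
  case True
  then have "{0..h} \<inter> {a<..b} = {0..min h b}" by auto
  then show ?thesis using True assms by (auto simp: clamp_def max_def min_def)
next
  case False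
  then have "{0..h} \<inter> {a<..b} = {a<..min h b}" by auto
  then show ?thesis using False assms by (auto simp: clamp_def max_def min_def)
qed

lemma measure_stratified_hits:
  fixes a b :: real and m :: nat
  assumes m: "m \<ge> 1" and ab: "0 \<le> a" "a \<le> b" "b \<le> 1" "b - a \<le> 1 / real m"
  shows "measure lborel {u \<in> {0..1/real m}. \<exists>j::nat. real j < real m \<and>
            a < u + real j / real m \<and> u + real j / real m \<le> b} = b - a"
proof -
  define h where "h = 1 / real m"
  have h: "h > 0" using m by (simp add: h_def)
  define B where "B j = {0..h} \<inter> {a - real j * h<..b - real j * h}" for j :: nat
  have eq: "{u \<in> {0..1/real m}. \<exists>j::nat. real j < real m \<and>
               a < u + real j / real m \<and> u + real j / real m \<le> b} = (\<Union>j<m. B j)"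
    by (auto simp: B_def h_def divide_inverse algebra_simps)
  have disj: "disjoint_family_on B {..<m}"
    unfolding disjoint_family_on_def
  proof (intro ballI impI)
    fix i j assume ij: "i \<in> {..<m}" "j \<in> {..<m}" "i \<noteq> j"
    show "B i \<inter> B j = {}"
    proof (rule ccontr)
      assume "B i \<inter> B j \<noteq> {}"
      then have "\<bar>real i - real j\<bar> * h < b - a"
        by (auto simp: B_def abs_if left_diff_distrib)
      moreover have "h \<le> \<bar>real i - real j\<bar> * h" using ij h by simp
      moreover have "b - a \<le> h" using ab by (simp add: h_def)
      ultimately show False by linarith
    qed
  qed
  have fin: "emeasure lborel (B j) \<noteq> \<infinity>" for j
  proof -
    have "emeasure lborel (B j) \<le> emeasure lborel {0..h}"
      by (rule emeasure_mono) (auto simp: B_def)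
    then show ?thesis using h by (auto simp: top_unique)
  qed
  have "measure lborel (\<Union>j<m. B j) = (\<Sum>j<m. measure lborel (B j))"
    by (rule measure_finite_Union[OF _ _ disj fin]) (auto simp: B_def)
  also have "\<dots> = (\<Sum>j<m. clamp h (b - real j * h) - clamp h (a - real j * h))"
    using ab h by (intro sum.cong refl) (simp add: B_def measure_Icc_inter_Ioc)
  also have "\<dots> = clamp (real m * h) b - clamp (real m * h) a"
    by (simp add: sum_subtractf sum_clamp_shift[OF h])
  also have "\<dots> = b - a" using m ab by (simp add: h_def clamp_def)
  finally show ?thesis using eq by simp
qed

lemma measure_stratified_hits_cumsum:
  fixes p :: "nat \<Rightarrow> real" and m :: nat
  assumes m: "m \<ge> 1" and p: "\<And>j. j < n \<Longrightarrow> 0 \<le> p j" "(\<Sum>j<n. p j) = 1"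
    and i: "i < n" "p i \<le> 1 / real m"
  shows "measure lborel {u \<in> {0..1/real m}. \<exists>j::nat. real j < real m \<and>
            (\<Sum>k<i. p k) < u + real j / real m \<and> u + real j / real m \<le> (\<Sum>k<Suc i. p k)} = p i"
proof -
  have mono: "(\<Sum>k<j. p k) \<le> (\<Sum>k<j'. p k)" if "j \<le> j'" "j' \<le> n" for j j'
    using that p(1) by (intro sum_mono2) auto
  have "0 \<le> (\<Sum>k<i. p k)" using mono[of 0 i] i(1) by simp
  moreover have "(\<Sum>k<Suc i. p k) \<le> 1" using mono[of "Suc i" n] i(1) p(2) by simp
  ultimately show ?thesis using measure_stratified_hits[OF m] i p(1) by simp
qed

lemma sum_min_one_strict_mono:
  fixes w :: "'a \<Rightarrow> real"
  assumes "finite s" "\<And>z. z \<in> s \<Longrightarrow> w z > 0" "c < d"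
    and "(\<Sum>z\<in>s. min 1 (c * w z)) < real (card s)"
  shows "(\<Sum>z\<in>s. min 1 (c * w z)) < (\<Sum>z\<in>s. min 1 (d * w z))"
proof (rule sum_strict_mono_ex1[OF assms(1)])
  show "\<forall>z\<in>s. min 1 (c * w z) \<le> min 1 (d * w z)"
  proof
    fix z assume "z \<in> s"
    then have "c * w z \<le> d * w z" using assms(2)[of z] assms(3) by simp
    then show "min 1 (c * w z) \<le> min 1 (d * w z)" by (simp add: min_def)
  qed
  obtain z where z: "z \<in> s" "c * w z < 1"
  proof (rule ccontr)
    assume "\<not> thesis"
    then have "\<forall>z\<in>s. min 1 (c * w z) = 1" using that by force
    then show False using assms(4) by simp
  qed
  then show "\<exists>z\<in>s. min 1 (c * w z) < min 1 (d * w z)"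
    using assms(2,3) by (intro bexI[of _ z]) auto
qed

lemma Cthr_solves:
  fixes w :: "nat list \<Rightarrow> real"
  assumes fin: "finite s" and card: "card s > N" and N: "N \<ge> 1"
    and pos: "\<And>z. z \<in> s \<Longrightarrow> w z > 0"
  shows Cthr_pos: "Cthr N w s > 0"
    and sum_min_Cthr: "(\<Sum>z\<in>s. min 1 (Cthr N w s * w z)) = real N"
proof -
  define h where "h c = (\<Sum>z\<in>s. min 1 (c * w z))" for c :: real
  define b where "b = (\<Sum>z\<in>s. 1 / w z)"
  have "1 \<le> b * w z" if "z \<in> s" for z
  proof -
    have "1 / w z \<le> b" unfolding b_def
      using that fin pos by (intro member_le_sum) (auto simp: less_imp_le)
    then show ?thesis using pos[OF that] by (simp add: field_simps)
  qed
  then have hb: "h b = real (card s)" unfolding h_def by (simp add: min_def)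
  have b0: "b \<ge> 0" unfolding b_def using pos by (auto intro: sum_nonneg simp: less_imp_le)
  have "continuous_on {0..b} h" unfolding h_def by (intro continuous_intros)
  then obtain c where c: "0 \<le> c" "h c = real N"
    using IVT'[of h 0 "real N" b] b0 hb card by (auto simp: h_def)
  have "c \<noteq> 0" using c N by (auto simp: h_def)
  have mono: "h u < h v" if "u < v" "h u = real N" for u v
    unfolding h_def using that card
    by (intro sum_min_one_strict_mono[OF fin] pos) (auto simp: h_def)
  have "c' = c" if "c' > 0" "h c' = real N" for c'
    using mono[of c c'] mono[of c' c] that c by (cases rule: linorder_cases[of c c']) auto
  then have "\<exists>!c. c > 0 \<and> (\<Sum>z\<in>s. min 1 (c * w z)) = real N"
    using c \<open>c \<noteq> 0\<close> unfolding h_def by (intro ex1I[of _ c]) auto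
  from theI'[OF this] show "Cthr N w s > 0" "(\<Sum>z\<in>s. min 1 (Cthr N w s * w z)) = real N"
    unfolding Cthr_def by auto
qed

lemma finite_paths: "finite (paths K n)"
proof -
  have "paths K n = {xs. set xs \<subseteq> {1..K} \<and> length xs = n}" by (auto simp: paths_def)
  then show ?thesis using finite_lists_length_eq[of "{1..K}" n] by simp
qed

lemma length_paths: "x \<in> paths K n \<Longrightarrow> length x = n"
  unfolding paths_def by auto

lemma nth_paths: "x \<in> paths K n \<Longrightarrow> i < n \<Longrightarrow> x ! i \<in> {1..K}"
  unfolding paths_def by (auto dest: nth_mem)

lemma take_paths: "x \<in> paths K n \<Longrightarrow> k \<le> n \<Longrightarrow> take k x \<in> paths K k"
  unfolding paths_def by (auto dest: in_set_takeD)

lemma drop_paths: "x \<in> paths K n \<Longrightarrow> k \<le> n \<Longrightarrow> drop k x \<in> paths K (n - k)"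
  unfolding paths_def by (auto dest: in_set_dropD)

lemma append_paths: "p \<in> paths K n \<Longrightarrow> r \<in> paths K m \<Longrightarrow> p @ r \<in> paths K (n + m)"
  unfolding paths_def by auto

lemma snoc_paths: "y \<in> paths K n \<Longrightarrow> a \<in> {1..K} \<Longrightarrow> y @ [a] \<in> paths K (Suc n)"
  unfolding paths_def by auto

lemma butlast_paths:
  assumes "z \<in> paths K (Suc n)"
  shows "butlast z \<in> paths K n" "last z \<in> {1..K}" "z = butlast z @ [last z]"
proof -
  have "z \<noteq> []" using assms by (auto simp: paths_def)
  then show "butlast z \<in> paths K n" "z = butlast z @ [last z]"
    using assms by (auto simp: paths_def dest: in_set_butlastD)
  show "last z \<in> {1..K}" using assms last_in_set[OF \<open>z \<noteq> []\<close>] unfolding paths_def by blast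
qed

lemma snoc_mem_ext: "z @ [a] \<in> ext K B \<longleftrightarrow> z \<in> B \<and> a \<in> {1..K}"
  by (auto simp: ext_def)

lemma mem_ext_iff: "y \<in> ext K B \<longleftrightarrow> y \<noteq> [] \<and> butlast y \<in> B \<and> last y \<in> {1..K}"
  by (auto simp: ext_def) (metis append_butlast_last_id)

lemma ext_subset_paths: "B \<subseteq> paths K n \<Longrightarrow> ext K B \<subseteq> paths K (Suc n)"
  by (auto simp: ext_def intro: snoc_paths)

section \<open>Inclusion probabilities\<close>

text \<open>Summing the law of a random finite set \<open>F\<close> over the sets containing \<open>y\<close> gives the
  probability of \<open>y \<in> F\<close>; this is how \<open>rin\<close> is obtained from \<open>rn\<close>.\<close>
lemma sum_measure_fibres:
  fixes F :: "real \<Rightarrow> 'a set"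
  assumes fin: "finite P" and sub: "\<And>u. F u \<subseteq> P"
    and meas: "\<And>y. {u. y \<in> F u} \<in> sets borel"
    and I: "I \<in> sets borel" "emeasure lborel I \<noteq> \<infinity>"
  shows "(\<Sum>s'\<in>{s'. s' \<subseteq> P \<and> y \<in> s'}. measure lborel {u \<in> I. F u = s'})
          = measure lborel {u \<in> I. y \<in> F u}"
proof -
  define S where "S = {s'. s' \<subseteq> P \<and> y \<in> s'}"
  have "finite S" using fin unfolding S_def by (auto intro: finite_subset[of _ "Pow P"])
  have [measurable]: "Measurable.pred borel (\<lambda>u. y \<in> F u)" for y
    using meas by (simp add: pred_def)
  have fibre: "{u \<in> I. F u = s'} \<in> sets lborel" if "s' \<in> S" for s'
  proof -
    have "{u \<in> I. F u = s'} = {u \<in> space borel. u \<in> I \<and> (\<forall>v\<in>P. v \<in> F u \<longleftrightarrow> v \<in> s')}"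
      using sub that unfolding S_def by auto
    also have "\<dots> \<in> sets borel" using fin I by measurable
    finally show ?thesis by simp
  qed
  have "(\<Sum>s'\<in>S. measure lborel {u \<in> I. F u = s'}) = measure lborel (\<Union>s'\<in>S. {u \<in> I. F u = s'})"
  proof (rule measure_finite_Union[symmetric])
    show "emeasure lborel {u \<in> I. F u = s'} \<noteq> \<infinity>" for s'
      using emeasure_mono[of "{u \<in> I. F u = s'}" I lborel] I by (auto simp: top_unique)
  qed (use \<open>finite S\<close> fibre in \<open>auto simp: disjoint_family_on_def\<close>)
  also have "(\<Union>s'\<in>S. {u \<in> I. F u = s'}) = {u \<in> I. y \<in> F u}"
    using sub unfolding S_def by auto
  finally show ?thesis unfolding S_def .
qed

definition kept :: "nat \<Rightarrow> (nat list \<Rightarrow> real) \<Rightarrow> nat list set \<Rightarrow> nat list set" where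
  "kept N w s = {z \<in> s. w z > 1 / Cthr N w s}"

text \<open>The paths that survive stratified resampling when U_1 = u, exactly as in the definition of \<open>rn\<close>.\<close>
definition survivors :: "nat \<Rightarrow> (nat list \<Rightarrow> real) \<Rightarrow> nat list set \<Rightarrow> real \<Rightarrow> nat list set" where
  "survivors N w s u =
    (let R = s - kept N w s; M = real (N - card (kept N w s)); xs = sorted_list_of_set R;
         Q = (\<lambda>i::nat. \<Sum>j<i. w (xs!j) / (\<Sum>v\<in>R. w v))
     in {xs!i | i. i < length xs \<and>
           (\<exists>j::nat. real j < M \<and> Q i < u + real j / M \<and> u + real j / M \<le> Q (Suc i))})"

lemma rn_resampling:
  assumes "\<not> card s \<le> N"
  shows "rn K N w s s' = real (N - card (kept N w s)) * measure lborel
           {u \<in> {0..1 / real (N - card (kept N w s))}. ext K (kept N w s \<union> survivors N w s u) = s'}"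
  using assms unfolding rn_def kept_def survivors_def Let_def by simp

lemma survivors_subset:
  assumes "finite s" shows "survivors N w s u \<subseteq> s - kept N w s"
proof
  fix v assume "v \<in> survivors N w s u"
  then obtain i where "i < length (sorted_list_of_set (s - kept N w s))"
    "v = sorted_list_of_set (s - kept N w s) ! i"
    unfolding survivors_def Let_def by auto
  then show "v \<in> s - kept N w s" using assms by (metis finite_Diff nth_mem set_sorted_list_of_set)
qed

lemma sets_survivor: "{u. z \<in> survivors N w s u} \<in> sets borel"
proof -
  define R where "R = s - kept N w s"
  define M where "M = real (N - card (kept N w s))"
  define xs where "xs = sorted_list_of_set R"
  define Q where "Q i = (\<Sum>j<i. w (xs!j) / (\<Sum>v\<in>R. w v))" for i :: nat
  have "{u. z \<in> survivors N w s u} = {u \<in> space borel. \<exists>i\<in>{..<length xs}. xs!i = z \<and>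
           (\<exists>j::nat. real j < M \<and> Q i < u + real j / M \<and> u + real j / M \<le> Q (Suc i))}"
    unfolding survivors_def Let_def R_def M_def xs_def Q_def by auto
  also have "\<dots> \<in> sets borel" by measurable
  finally show ?thesis .
qed

locale resampling =
  fixes N :: nat and w :: "nat list \<Rightarrow> real" and s :: "nat list set"
  assumes finite_s: "finite s" and N_less_card: "N < card s" and N_pos: "1 \<le> N"
    and w_pos: "\<And>z. z \<in> s \<Longrightarrow> w z > 0"
begin

abbreviation "C \<equiv> Cthr N w s"
abbreviation "L \<equiv> card (kept N w s)"

lemma C_pos: "C > 0" and sum_min_C: "(\<Sum>z\<in>s. min 1 (C * w z)) = real N"
  using Cthr_solves[OF finite_s N_less_card N_pos w_pos] by auto

lemma mem_kept_iff: "v \<in> kept N w s \<longleftrightarrow> v \<in> s \<and> 1 < C * w v"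
  using C_pos by (auto simp: kept_def divide_less_eq mult.commute)

lemma card_kept_plus_sum: "real L + C * (\<Sum>v\<in>s - kept N w s. w v) = real N"
proof -
  have sub: "kept N w s \<subseteq> s" by (auto simp: kept_def)
  have "real N = (\<Sum>z\<in>kept N w s. min 1 (C * w z)) + (\<Sum>z\<in>s - kept N w s. min 1 (C * w z))"
    using sum.subset_diff[OF sub finite_s, of "\<lambda>z. min 1 (C * w z)"] sum_min_C by simp
  also have "(\<Sum>z\<in>kept N w s. min 1 (C * w z)) = real L"
    by (simp add: mem_kept_iff)
  also have "(\<Sum>z\<in>s - kept N w s. min 1 (C * w z)) = C * (\<Sum>v\<in>s - kept N w s. w v)"
    unfolding sum_distrib_left by (intro sum.cong refl) (auto simp: mem_kept_iff)
  finally show ?thesis by simp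
qed

lemma card_kept_less: "L < N"
proof -
  have "s - kept N w s \<noteq> {}"
  proof
    assume "s - kept N w s = {}"
    then have "kept N w s = s" by (auto simp: kept_def)
    then show False using card_kept_plus_sum N_less_card by simp
  qed
  then have "(\<Sum>v\<in>s - kept N w s. w v) > 0"
    using finite_s w_pos by (intro sum_pos) auto
  then have "real L < real N" using card_kept_plus_sum C_pos by (smt (verit) mult_pos_pos)
  then show ?thesis by simp
qed

lemma sum_unkept: "(\<Sum>v\<in>s - kept N w s. w v) = real (N - L) / C"
  using card_kept_plus_sum card_kept_less C_pos by (simp add: of_nat_diff field_simps)

lemma measure_survivor:
  assumes z: "z \<in> s - kept N w s"
  shows "real (N - L) * measure lborel {u \<in> {0..1 / real (N - L)}. z \<in> survivors N w s u} = C * w z"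
proof -
  define R where "R = s - kept N w s"
  define m where "m = N - L"
  define xs where "xs = sorted_list_of_set R"
  define p where "p j = w (xs!j) / (\<Sum>v\<in>R. w v)" for j
  have m: "m \<ge> 1" using card_kept_less by (simp add: m_def)
  have xs: "distinct xs" "set xs = R" using finite_s by (auto simp: xs_def R_def)
  have p_eq: "p j = C * w (xs!j) / real m" for j
    using C_pos m by (simp add: p_def R_def m_def sum_unkept field_simps)
  obtain i where i: "i < length xs" "xs ! i = z" using z xs(2) unfolding R_def by (metis in_set_conv_nth)
  have surv: "z \<in> survivors N w s u \<longleftrightarrow> (\<exists>j::nat. real j < real m \<and>
      (\<Sum>k<i. p k) < u + real j / real m \<and> u + real j / real m \<le> (\<Sum>k<Suc i. p k))" for u
    using i xs(1) unfolding survivors_def Let_def R_def[symmetric] m_def[symmetric] xs_def[symmetric]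
      p_def by (auto simp: nth_eq_iff_index_eq)
  have p_nonneg: "0 \<le> p j" if "j < length xs" for j
    using that xs w_pos C_pos nth_mem[of j xs] by (simp add: p_eq R_def less_imp_le)
  have "(\<Sum>j<length xs. w (xs ! j)) = sum_list (map w xs)"
    by (simp add: sum_list_sum_nth atLeast0LessThan)
  also have "\<dots> = (\<Sum>v\<in>R. w v)" using xs by (simp add: sum_list_distinct_conv_sum_set)
  finally have "(\<Sum>j<length xs. p j) = (\<Sum>v\<in>R. w v) / (\<Sum>v\<in>R. w v)"
    unfolding p_def sum_divide_distrib[symmetric] by simp
  also have "\<dots> = 1" using C_pos m by (simp add: R_def m_def sum_unkept)
  finally have p_sum: "(\<Sum>j<length xs. p j) = 1" .
  have "\<not> 1 < C * w z" using z mem_kept_iff by blast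
  then have "p i \<le> 1 / real m" using m i by (simp add: p_eq divide_right_mono)
  then show ?thesis
    using measure_stratified_hits_cumsum[OF m p_nonneg p_sum i(1)] m i
    by (simp add: surv m_def[symmetric] p_eq)
qed

lemma rin_snoc_eq_min:
  assumes sub: "s \<subseteq> paths K n" and z: "z \<in> s" and a: "a \<in> {1..K}"
  shows "rin K N w s (Suc n) (z @ [a]) = min 1 (C * w z)"
proof -
  have more_than_N: "\<not> card s \<le> N" using N_less_card by simp
  define M where "M = N - L"
  define F where "F u = ext K (kept N w s \<union> survivors N w s u)" for u
  have M: "M \<ge> 1" using card_kept_less by (simp add: M_def)
  have F_sub: "F u \<subseteq> paths K (Suc n)" for u
    using survivors_subset[OF finite_s, of N w u] sub unfolding F_def
    by (intro ext_subset_paths) (auto simp: kept_def)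
  have sets_F: "{u. y \<in> F u} \<in> sets borel" for y
  proof -
    have "{u. y \<in> F u} = (if y \<noteq> [] \<and> last y \<in> {1..K} then
        (if butlast y \<in> kept N w s then UNIV else {u. butlast y \<in> survivors N w s u}) else {})"
      by (auto simp: F_def mem_ext_iff)
    then show ?thesis using sets_survivor by simp
  qed
  have "rin K N w s (Suc n) (z @ [a])
      = (\<Sum>s'\<in>{s'. s' \<subseteq> paths K (Suc n) \<and> z @ [a] \<in> s'}.
           real M * measure lborel {u \<in> {0..1 / real M}. F u = s'})"
    unfolding rin_def rn_resampling[OF more_than_N] M_def F_def ..
  also have "\<dots> = real M * measure lborel {u \<in> {0..1 / real M}. z @ [a] \<in> F u}"
    unfolding sum_distrib_left[symmetric]
    by (subst sum_measure_fibres[OF finite_paths F_sub sets_F]) auto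
  also have "{u \<in> {0..1 / real M}. z @ [a] \<in> F u}
      = {u \<in> {0..1 / real M}. z \<in> kept N w s \<or> z \<in> survivors N w s u}"
    using a by (auto simp: F_def snoc_mem_ext)
  finally have rin_eq: "rin K N w s (Suc n) (z @ [a])
      = real M * measure lborel {u \<in> {0..1 / real M}. z \<in> kept N w s \<or> z \<in> survivors N w s u}" .
  show ?thesis
  proof (cases "z \<in> kept N w s")
    case True
    then have "{u \<in> {0..1 / real M}. z \<in> kept N w s \<or> z \<in> survivors N w s u} = {0..1 / real M}"
      by auto
    then show ?thesis using M True mem_kept_iff unfolding rin_eq by simp
  next
    case False
    then have "\<not> 1 < C * w z" using z mem_kept_iff by blast
    then show ?thesis
      using False z measure_survivor[of z] unfolding rin_eq M_def by simp
  qed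
qed

end

lemma rin_snoc_eq_keepp:
  assumes N: "1 \<le> N" and fin: "finite s" and sub: "s \<subseteq> paths K n"
    and pos: "\<And>z. z \<in> s \<Longrightarrow> w z > 0" and z: "z \<in> s" and a: "a \<in> {1..K}"
  shows "rin K N w s (Suc n) (z @ [a]) = keepp N w s z"
proof (cases "card s \<le> N")
  case True
  have "ext K s \<in> {s'. s' \<subseteq> paths K (Suc n) \<and> z @ [a] \<in> s'}"
    using ext_subset_paths[OF sub] z a by (auto simp: snoc_mem_ext)
  moreover have "finite {s'. s' \<subseteq> paths K (Suc n) \<and> z @ [a] \<in> s'}"
    by (rule finite_subset[of _ "Pow (paths K (Suc n))"]) (auto simp: finite_paths)
  ultimately show ?thesis
    using True unfolding rin_def rn_def keepp_def by (simp add: sum.delta')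
next
  case False
  interpret resampling N w s using False N fin pos by unfold_locales auto
  show ?thesis using False rin_snoc_eq_min[OF sub z a] by (simp add: keepp_def)
qed

lemma rn_nonzero_imp_ext:
  assumes fin: "finite s" and nz: "rn K N w s s' \<noteq> 0"
  shows "\<exists>A \<subseteq> s. s' = ext K A"
proof (cases "card s \<le> N")
  case True
  then show ?thesis using nz by (auto simp: rn_def split: if_splits)
next
  case False
  then obtain u where "ext K (kept N w s \<union> survivors N w s u) = s'"
    using nz unfolding rn_resampling[OF False] by fastforce
  moreover have "kept N w s \<union> survivors N w s u \<subseteq> s"
    using survivors_subset[OF fin] by (auto simp: kept_def)
  ultimately show ?thesis by blast
qed

lemma length_Supps: "ss \<in> Supps K n \<Longrightarrow> length ss = n"
  unfolding Supps_def by simp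

lemma nth_Supps_subset:
  assumes "ss \<in> Supps K n" "1 \<le> k" "k \<le> n"
  shows "ss!(k-1) \<subseteq> paths K k"
proof -
  have "k - 1 < n" using assms by simp
  then have "ss ! (k - 1) \<subseteq> paths K (Suc (k - 1))" using assms(1) unfolding Supps_def by blast
  then show ?thesis using assms(2) by simp
qed

lemma finite_nth_Supps: "ss \<in> Supps K n \<Longrightarrow> 1 \<le> k \<Longrightarrow> k \<le> n \<Longrightarrow> finite (ss!(k-1))"
  using nth_Supps_subset finite_paths by (rule finite_subset)

lemma snoc_Supps_iff: "ss @ [s] \<in> Supps K (Suc n) \<longleftrightarrow> ss \<in> Supps K n \<and> s \<subseteq> paths K (Suc n)"
proof -
  have "(\<forall>i<Suc (length ss). (ss @ [s]) ! i \<subseteq> paths K (Suc i))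
      \<longleftrightarrow> (\<forall>i<length ss. ss ! i \<subseteq> paths K (Suc i)) \<and> s \<subseteq> paths K (Suc (length ss))"
    by (simp add: less_Suc_eq all_conj_distrib nth_append)
  then show ?thesis unfolding Supps_def by auto
qed

lemma take_Supps: "ss \<in> Supps K n \<Longrightarrow> m \<le> n \<Longrightarrow> take m ss \<in> Supps K m"
  unfolding Supps_def by auto

lemma finite_Supps: "finite (Supps K n)"
proof -
  have "Supps K n \<subseteq> {xs. set xs \<subseteq> Pow (\<Union>i\<le>n. paths K i) \<and> length xs = n}"
    unfolding Supps_def by (force simp: in_set_conv_nth)
  moreover have "finite {xs. set xs \<subseteq> Pow (\<Union>i\<le>n. paths K i) \<and> length xs = n}"
    by (rule finite_lists_length_eq) (simp add: finite_paths)
  ultimately show ?thesis by (rule finite_subset)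
qed

lemma Supps_Suc:
  "Supps K (Suc n) = (\<lambda>(ss, s). ss @ [s]) ` (Supps K n \<times> Pow (paths K (Suc n)))"
proof (intro equalityI subsetI)
  fix ss assume ss: "ss \<in> Supps K (Suc n)"
  then obtain ss0 s where "ss = ss0 @ [s]"
    using length_Supps by (metis length_Suc_conv_rev)
  then show "ss \<in> (\<lambda>(ss, s). ss @ [s]) ` (Supps K n \<times> Pow (paths K (Suc n)))"
    using ss snoc_Supps_iff by auto
qed (auto simp: snoc_Supps_iff)

lemma sum_Supps_Suc:
  "(\<Sum>ss\<in>Supps K (Suc n). F ss) = (\<Sum>ss\<in>Supps K n. \<Sum>s\<in>Pow (paths K (Suc n)). F (ss @ [s]))"
proof -
  have inj: "inj_on (\<lambda>(ss, s). ss @ [s]) (Supps K n \<times> Pow (paths K (Suc n)))"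
    by (auto simp: inj_on_def)
  show ?thesis
    unfolding Supps_Suc sum.reindex[OF inj] sum.cartesian_product by (simp add: case_prod_beta)
qed

section \<open>Weights of the discrete particle filter\<close>

lemma Wt_append: "n \<le> length ss \<Longrightarrow> Wt K N nu f g (ss @ ts) n = Wt K N nu f g ss n"
proof (induction n)
  case (Suc m)
  then show ?case by (cases m) (auto intro!: ext simp: Let_def nth_append)
qed (simp add: fun_eq_iff)

lemma Wt_take: "n \<le> k \<Longrightarrow> Wt K N nu f g (take k ss) n = Wt K N nu f g ss n"
  by (cases "k \<le> length ss") (use Wt_append[of n "take k ss" K N nu f g "drop k ss"] in auto)

lemma psi_append:
  assumes "1 \<le> n" "n \<le> length ss"
  shows "psi K N nu f g n (ss @ ts) = psi K N nu f g n ss"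
proof -
  have "(ss @ ts) ! 0 = ss ! 0" using assms by (cases ss) auto
  moreover have "(\<Prod>k\<in>{2..n}. rn K N (Wt K N nu f g (ss @ ts) (k-1)) ((ss @ ts)!(k-2)) ((ss @ ts)!(k-1)))
      = (\<Prod>k\<in>{2..n}. rn K N (Wt K N nu f g ss (k-1)) (ss!(k-2)) (ss!(k-1)))"
    using assms by (intro prod.cong refl) (auto simp: Wt_append nth_append)
  ultimately show ?thesis unfolding psi_def by simp
qed

lemma psi_snoc:
  assumes "1 \<le> n" "length ss = n"
  shows "psi K N nu f g (Suc n) (ss @ [s]) = psi K N nu f g n ss * rn K N (Wt K N nu f g ss n) (ss!(n-1)) s"
proof -
  have "psi K N nu f g (Suc n) (ss @ [s]) = psi K N nu f g n (ss @ [s]) *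
      rn K N (Wt K N nu f g (ss @ [s]) n) ((ss @ [s])!(n-1)) ((ss @ [s])!n)"
    using assms unfolding psi_def by (simp add: prod.cl_ivl_Suc mult.assoc)
  then show ?thesis using assms by (simp add: psi_append Wt_append nth_append)
qed

lemma psi_nonzero_first: "psi K N nu f g n ss \<noteq> 0 \<Longrightarrow> ss!0 = paths K 1"
  unfolding psi_def by (simp split: if_splits)

lemma psi_nonzero_rn:
  assumes "psi K N nu f g n ss \<noteq> 0" "1 \<le> k" "k < n"
  shows "rn K N (Wt K N nu f g ss k) (ss!(k-1)) (ss!k) \<noteq> 0"
proof -
  have "(\<Prod>k\<in>{2..n}. rn K N (Wt K N nu f g ss (k-1)) (ss!(k-2)) (ss!(k-1))) \<noteq> 0"
    using assms(1) unfolding psi_def by auto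
  moreover have "Suc k \<in> {2..n}" using assms by simp
  ultimately have "rn K N (Wt K N nu f g ss (Suc k - 1)) (ss!(Suc k - 2)) (ss!(Suc k - 1)) \<noteq> 0"
    by (metis (no_types, lifting) prod_zero_iff finite_atLeastAtMost)
  then show ?thesis by simp
qed

lemma joint_eq_take_pfut:
  assumes "1 \<le> n" "n \<le> m"
  shows "joint nu f g m x = joint nu f g n (take n x) * pfut_x f m n x * pfut_y g m n x"
proof -
  define F where "F k = f (take (k - 1) x) (x ! (k - 1)) * g k (take k x)" for k
  have "{2..m} = {2..n} \<union> {Suc n..m}" using assms by auto
  then have "(\<Prod>k\<in>{2..m}. F k) = (\<Prod>k\<in>{2..n}. F k) * (\<Prod>k\<in>{Suc n..m}. F k)"
    by (simp add: prod.union_disjoint)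
  moreover have "(\<Prod>k\<in>{2..n}. F k)
      = (\<Prod>k\<in>{2..n}. f (take (k - 1) (take n x)) (take n x ! (k - 1)) * g k (take k (take n x)))"
    unfolding F_def by (intro prod.cong refl) (auto simp: min_def)
  moreover have "(\<Prod>k\<in>{Suc n..m}. F k) = pfut_x f m n x * pfut_y g m n x"
    unfolding F_def pfut_x_def pfut_y_def by (simp add: prod.distrib)
  moreover have "take n x ! 0 = x ! 0" "take 1 (take n x) = take 1 x" using assms by (auto simp: min_def)
  ultimately show ?thesis unfolding joint_def F_def by (simp add: mult.assoc)
qed

definition Wbar :: "nat \<Rightarrow> nat \<Rightarrow> (nat \<Rightarrow> real) \<Rightarrow> (nat list \<Rightarrow> nat \<Rightarrow> real) \<Rightarrow> (nat \<Rightarrow> nat list \<Rightarrow> real)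
    \<Rightarrow> nat list set list \<Rightarrow> nat \<Rightarrow> nat list \<Rightarrow> real" where
  "Wbar K N nu f g ss n z = f (butlast z) (last z) * g (Suc n) z * Wt K N nu f g ss n (butlast z) /
     keepp N (Wt K N nu f g ss n) (ss!(n-1)) (butlast z)"

lemma Wt_Suc:
  assumes "1 \<le> n"
  shows "Wt K N nu f g ss (Suc n) z =
    (if z \<in> ss!n then Wbar K N nu f g ss n z / (\<Sum>u\<in>ss!n. Wbar K N nu f g ss n u) else 0)"
proof (cases n)
  case (Suc m)
  then show ?thesis unfolding Wbar_def by (simp only: Wt.simps Let_def diff_Suc_1)
qed (use assms in simp)

text \<open>prod_{k<n} (1 /\ C_k W_k(x_{1:k})), the probability that x_{1:n} survives every resampling step.\<close>
definition keep_prod :: "nat \<Rightarrow> nat \<Rightarrow> (nat \<Rightarrow> real) \<Rightarrow> (nat list \<Rightarrow> nat \<Rightarrow> real) \<Rightarrow> (nat \<Rightarrow> nat list \<Rightarrow> real)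
    \<Rightarrow> nat list set list \<Rightarrow> nat \<Rightarrow> nat list \<Rightarrow> real" where
  "keep_prod K N nu f g ss n z =
     (\<Prod>k\<in>{2..n}. keepp N (Wt K N nu f g ss (k-1)) (ss!(k-2)) (take (k-1) z))"

lemma keep_prod_snoc:
  assumes "1 \<le> n" "length y = n"
  shows "keep_prod K N nu f g ss (Suc n) (y @ [a]) =
           keep_prod K N nu f g ss n y * keepp N (Wt K N nu f g ss n) (ss!(n-1)) y"
proof -
  have "(\<Prod>k\<in>{2..n}. keepp N (Wt K N nu f g ss (k-1)) (ss!(k-2)) (take (k-1) (y @ [a])))
      = keep_prod K N nu f g ss n y"
    unfolding keep_prod_def using assms by (intro prod.cong refl) auto
  then show ?thesis using assms unfolding keep_prod_def by (simp add: prod.cl_ivl_Suc)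
qed

lemma keepp_pos:
  assumes "1 \<le> N" "finite s" "\<And>z. z \<in> s \<Longrightarrow> w z > 0" "z \<in> s"
  shows "keepp N w s z > 0"
proof (cases "card s \<le> N")
  case False
  then have "Cthr N w s > 0" using Cthr_pos[of s N w] assms by auto
  then show ?thesis using False assms(3,4) by (simp add: keepp_def)
qed (simp add: keepp_def)

locale dpf =
  fixes K N T :: nat and nu :: "nat \<Rightarrow> real" and f :: "nat list \<Rightarrow> nat \<Rightarrow> real"
    and g :: "nat \<Rightarrow> nat list \<Rightarrow> real"
  assumes K_pos: "1 \<le> K" and T_pos: "1 \<le> T" and N_pos: "1 \<le> N"
    and f_nonneg: "\<And>xs n a. xs \<in> paths K n \<Longrightarrow> 1 \<le> n \<Longrightarrow> n < T \<Longrightarrow> a \<in> {1..K} \<Longrightarrow> f xs a \<ge> 0"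
    and g_nonneg: "\<And>xs n. xs \<in> paths K n \<Longrightarrow> 1 \<le> n \<Longrightarrow> n \<le> T \<Longrightarrow> g n xs \<ge> 0"
    and joint_pos: "\<And>xs n. xs \<in> paths K n \<Longrightarrow> 1 \<le> n \<Longrightarrow> n \<le> T \<Longrightarrow> joint nu f g n xs > 0"
begin

lemma joint_snoc:
  assumes "y \<in> paths K n" "1 \<le> n"
  shows "joint nu f g (Suc n) (y @ [a]) = joint nu f g n y * (f y a * g (Suc n) (y @ [a]))"
  using joint_eq_take_pfut[of n "Suc n" nu f g "y @ [a]"] assms length_paths[OF assms(1)]
  by (simp add: pfut_x_def pfut_y_def nth_append)

lemma f_g_pos:
  assumes "y \<in> paths K n" "1 \<le> n" "n < T" "a \<in> {1..K}"
  shows "f y a * g (Suc n) (y @ [a]) > 0"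
proof -
  have "joint nu f g (Suc n) (y @ [a]) > 0" using assms by (intro joint_pos snoc_paths) auto
  moreover have "joint nu f g n y > 0" using assms by (intro joint_pos) auto
  ultimately show ?thesis unfolding joint_snoc[OF assms(1,2)] by (simp add: zero_less_mult_iff)
qed

lemma nu_g_pos: "u \<in> paths K 1 \<Longrightarrow> nu (hd u) * g 1 u > 0"
  using joint_pos[of u 1] T_pos by (auto simp: paths_def joint_def length_Suc_conv)

lemma sum_nu_g_pos: "(\<Sum>u\<in>paths K 1. nu (hd u) * g 1 u) > 0"
proof (rule sum_pos[OF finite_paths])
  show "paths K 1 \<noteq> {}" using K_pos by (auto simp: paths_def intro!: exI[of _ "[1]"])
qed (rule nu_g_pos)

lemma pfut_nonneg:
  assumes x: "x \<in> paths K T" and n: "1 \<le> n"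
  shows "pfut_x f T n x \<ge> 0" "pfut_y g T n x \<ge> 0"
proof -
  show "pfut_x f T n x \<ge> 0" unfolding pfut_x_def
  proof (rule prod_nonneg, rule f_nonneg)
    fix k assume k: "k \<in> {n+1..T}"
    show "take (k - 1) x \<in> paths K (k - 1)" using x k by (intro take_paths) auto
    show "1 \<le> k - 1" "k - 1 < T" using k n by auto
    show "x ! (k - 1) \<in> {1..K}" using x k by (intro nth_paths) auto
  qed
  show "pfut_y g T n x \<ge> 0" unfolding pfut_y_def
    using x n by (intro prod_nonneg g_nonneg take_paths) auto
qed

lemma sum_joint_pos: "(\<Sum>u\<in>paths K T. joint nu f g T u) > 0"
proof (rule sum_pos[OF finite_paths])
  show "paths K T \<noteq> {}" using K_pos by (auto simp: paths_def intro!: exI[of _ "replicate T 1"])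
qed (use T_pos joint_pos in auto)

end

locale dpf_supports = dpf +
  fixes n :: nat and ss :: "nat list set list"
  assumes ss_Supps: "ss \<in> Supps K n" and n_pos: "1 \<le> n" and n_le_T: "n \<le> T"
    and psi_nonzero: "psi K N nu f g n ss \<noteq> 0"
begin

lemma first_support: "ss!0 = paths K 1"
  using psi_nonzero by (rule psi_nonzero_first)

lemma butlast_mem_support:
  assumes "1 \<le> k" "k < n" "z \<in> ss!k"
  shows "butlast z \<in> ss!(k-1)"
proof -
  obtain A where "A \<subseteq> ss!(k-1)" "ss!k = ext K A"
    using rn_nonzero_imp_ext[OF finite_nth_Supps[OF ss_Supps] psi_nonzero_rn[OF psi_nonzero]] assms
    by force
  then show ?thesis using assms(3) by (auto simp: mem_ext_iff)
qed

lemma take_mem_support: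
  assumes p: "p \<in> ss!(n-1)" and k: "1 \<le> k" "k \<le> n"
  shows "take k p \<in> ss!(k-1)"
  using k(2)
proof (induction k rule: inc_induct)
  case base
  have "length p = n" using nth_Supps_subset[OF ss_Supps n_pos order_refl] p length_paths by blast
  then show ?case using p by simp
next
  case (step j)
  have "length p = n" using nth_Supps_subset[OF ss_Supps n_pos order_refl] p length_paths by blast
  then have "butlast (take (Suc j) p) = take j p" using step.hyps by (simp add: butlast_take)
  then show ?case
    using butlast_mem_support[of j "take (Suc j) p"] step k by simp
qed

lemma Wbar_pos:
  assumes k: "1 \<le> k" "k < n" and pos: "\<And>y. y \<in> ss!(k-1) \<Longrightarrow> Wt K N nu f g ss k y > 0"
    and u: "u \<in> ss!k"
  shows "Wbar K N nu f g ss k u > 0"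
proof -
  have "ss!k \<subseteq> paths K (Suc k)" using nth_Supps_subset[OF ss_Supps, of "Suc k"] k by simp
  then have "u \<in> paths K (Suc k)" using u by blast
  note u_paths = butlast_paths[OF this]
  have y: "butlast u \<in> ss!(k-1)" using butlast_mem_support k u by blast
  have "f (butlast u) (last u) * g (Suc k) u > 0"
    using f_g_pos[OF u_paths(1) k(1) _ u_paths(2)] u_paths(3) k n_le_T by simp
  moreover have "keepp N (Wt K N nu f g ss k) (ss!(k-1)) (butlast u) > 0"
    using k pos y by (intro keepp_pos N_pos finite_nth_Supps[OF ss_Supps]) auto
  ultimately show ?thesis unfolding Wbar_def using pos[OF y] by simp
qed

lemma Wt_pos:
  assumes "1 \<le> k" "k \<le> n" "z \<in> ss!(k-1)"
  shows "Wt K N nu f g ss k z > 0"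
  using assms
proof (induction k arbitrary: z rule: nat_induct_at_least)
  case base
  then show ?case using first_support nu_g_pos sum_nu_g_pos by simp
next
  case (Suc k)
  have Wbar: "Wbar K N nu f g ss k u > 0" if "u \<in> ss!k" for u
    using Suc that by (intro Wbar_pos) auto
  moreover have "finite (ss!k)" using finite_nth_Supps[OF ss_Supps, of "Suc k"] Suc by simp
  ultimately have "(\<Sum>u\<in>ss!k. Wbar K N nu f g ss k u) > 0" using Suc by (intro sum_pos) auto
  then show ?case using Suc Wbar[of z] by (simp add: Wt_Suc)
qed

lemma sum_Wt_eq_1:
  assumes "ss!(n-1) \<noteq> {}"
  shows "(\<Sum>z\<in>ss!(n-1). Wt K N nu f g ss n z) = 1"
proof (cases "n = 1")
  case True
  then show ?thesis using first_support sum_nu_g_pos by (simp add: sum_divide_distrib[symmetric])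
next
  case False
  then obtain k where k: "n = Suc k" "1 \<le> k" using n_pos by (cases n) auto
  have "Wbar K N nu f g ss k u > 0" if "u \<in> ss!k" for u
    using k that by (intro Wbar_pos Wt_pos) auto
  moreover have "finite (ss!k)" using finite_nth_Supps[OF ss_Supps n_pos order_refl] k by simp
  ultimately have "(\<Sum>u\<in>ss!k. Wbar K N nu f g ss k u) > 0"
    using assms k by (intro sum_pos) auto
  then show ?thesis using k by (simp add: Wt_Suc sum_divide_distrib[symmetric])
qed

lemma Wt_Suc_eq_joint:
  assumes k: "1 \<le> k" "k < n" and z: "z \<in> ss!k"
    and W: "Wt K N nu f g ss k (butlast z) =
              c * joint nu f g k (butlast z) / keep_prod K N nu f g ss k (butlast z)"
  shows "Wt K N nu f g ss (Suc k) z = c / (\<Sum>u\<in>ss!k. Wbar K N nu f g ss k u) *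
           joint nu f g (Suc k) z / keep_prod K N nu f g ss (Suc k) z"
proof -
  define y where "y = butlast z"
  define D where "D = (\<Sum>u\<in>ss!k. Wbar K N nu f g ss k u)"
  have "ss!k \<subseteq> paths K (Suc k)" using nth_Supps_subset[OF ss_Supps, of "Suc k"] k by simp
  then have "z \<in> paths K (Suc k)" using z by blast
  note z_paths = butlast_paths[OF this, folded y_def]
  have y: "y \<in> ss!(k-1)" using butlast_mem_support k z unfolding y_def by simp
  have Wbar: "Wbar K N nu f g ss k u > 0" if "u \<in> ss!k" for u
    using k that by (intro Wbar_pos Wt_pos) auto
  have "Wt K N nu f g ss k y > 0" using Wt_pos k y by simp
  then have "keep_prod K N nu f g ss k y \<noteq> 0" using W unfolding y_def[symmetric] by auto
  moreover have "keepp N (Wt K N nu f g ss k) (ss!(k-1)) y \<noteq> 0"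
    using Wbar[OF z] by (auto simp: Wbar_def y_def)
  moreover have "D > 0"
    using Wbar finite_nth_Supps[OF ss_Supps, of "Suc k"] k z unfolding D_def by (intro sum_pos) auto
  moreover have "joint nu f g (Suc k) z = joint nu f g k y * (f y (last z) * g (Suc k) z)"
    using joint_snoc[OF z_paths(1) k(1), of "last z"] unfolding z_paths(3)[symmetric] .
  moreover have "keep_prod K N nu f g ss (Suc k) z =
      keep_prod K N nu f g ss k y * keepp N (Wt K N nu f g ss k) (ss!(k-1)) y"
    using keep_prod_snoc[OF k(1), of y] z_paths length_paths by metis
  moreover have "Wt K N nu f g ss (Suc k) z = Wbar K N nu f g ss k z / D"
    using z k by (simp add: Wt_Suc D_def)
  moreover have "Wbar K N nu f g ss k z = f y (last z) * g (Suc k) z * Wt K N nu f g ss k y /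
      keepp N (Wt K N nu f g ss k) (ss!(k-1)) y"
    by (simp add: Wbar_def y_def)
  ultimately show ?thesis using W unfolding y_def[symmetric] D_def[symmetric] by (simp add: field_simps)
qed

lemma Wt_eq_joint:
  assumes "1 \<le> k" "k \<le> n"
  shows "\<exists>c>0. \<forall>z\<in>ss!(k-1).
           Wt K N nu f g ss k z = c * joint nu f g k z / keep_prod K N nu f g ss k z"
  using assms
proof (induction k rule: nat_induct_at_least)
  case base
  have "Wt K N nu f g ss 1 z = 1 / (\<Sum>u\<in>paths K 1. nu (hd u) * g 1 u) * joint nu f g 1 z /
          keep_prod K N nu f g ss 1 z" if "z \<in> paths K 1" for z
    using that by (auto simp: paths_def length_Suc_conv joint_def keep_prod_def)
  then show ?case using first_support sum_nu_g_pos by (intro exI[of _ "1 / _"]) auto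
next
  case (Suc k)
  obtain c where c: "c > 0"
    and W: "\<And>y. y \<in> ss!(k-1) \<Longrightarrow> Wt K N nu f g ss k y = c * joint nu f g k y / keep_prod K N nu f g ss k y"
    using Suc by auto
  define D where "D = (\<Sum>u\<in>ss!k. Wbar K N nu f g ss k u)"
  have "Wt K N nu f g ss (Suc k) z = c / D * joint nu f g (Suc k) z / keep_prod K N nu f g ss (Suc k) z"
    if "z \<in> ss!k" for z
    unfolding D_def using Suc that butlast_mem_support by (intro Wt_Suc_eq_joint W) auto
  moreover have "D > 0" if "ss!k \<noteq> {}"
    using Suc that finite_nth_Supps[OF ss_Supps, of "Suc k"] unfolding D_def
    by (intro sum_pos Wbar_pos Wt_pos) auto
  ultimately show ?case
    using c by (cases "ss!k = {}") (auto intro: exI[of _ "1::real"] exI[of _ "c / D"])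
qed


lemma prod_rin_eq_keep_prod:
  assumes p: "p \<in> ss!(n-1)"
  shows "(\<Prod>k\<in>{2..n}. rin K N (Wt K N nu f g ss (k-1)) (ss!(k-2)) k (take k p))
           = keep_prod K N nu f g ss n p"
  unfolding keep_prod_def
proof (rule prod.cong[OF refl])
  fix k assume k: "k \<in> {2..n}"
  define j where "j = k - 1"
  have j: "k = Suc j" "1 \<le> j" "j < n" using k by (auto simp: j_def)
  have "length p = n" using nth_Supps_subset[OF ss_Supps n_pos order_refl] p length_paths by blast
  then have take_Suc: "take (Suc j) p = take j p @ [p ! j]" using j by (simp add: take_Suc_conv_app_nth)
  have "p \<in> paths K n" using nth_Supps_subset[OF ss_Supps n_pos order_refl] p by blast
  then have "p ! j \<in> {1..K}" using j by (intro nth_paths) auto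
  moreover have "finite (ss!(j-1))" "ss!(j-1) \<subseteq> paths K j"
    using finite_nth_Supps[OF ss_Supps] nth_Supps_subset[OF ss_Supps] j by auto
  moreover have "take j p \<in> ss!(j-1)" using take_mem_support[OF p] j by simp
  ultimately have "rin K N (Wt K N nu f g ss j) (ss!(j-1)) (Suc j) (take j p @ [p ! j])
      = keepp N (Wt K N nu f g ss j) (ss!(j-1)) (take j p)"
    using Wt_pos[of j] j by (intro rin_snoc_eq_keepp[OF N_pos]) auto
  then show "rin K N (Wt K N nu f g ss (k-1)) (ss!(k-2)) k (take k p)
      = keepp N (Wt K N nu f g ss (k-1)) (ss!(k-2)) (take (k-1) p)"
    unfolding j(1) using take_Suc by simp
qed

lemma Vb_nonneg:
  assumes "p \<in> ss!(n-1)" "r \<in> paths K (T-n)"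
  shows "Vb K N nu f g T ss n r p \<ge> 0"
proof -
  have "p \<in> paths K n" using nth_Supps_subset[OF ss_Supps n_pos order_refl] assms(1) by blast
  then have "p @ r \<in> paths K T" using append_paths[OF _ assms(2)] n_le_T by fastforce
  then show ?thesis
    unfolding Vb_def using Wt_pos[OF n_pos order_refl assms(1)] pfut_nonneg[OF _ n_pos] by simp
qed

end

lemma (in dpf) dpf_supportsI:
  "ss \<in> Supps K n \<Longrightarrow> 1 \<le> n \<Longrightarrow> n \<le> T \<Longrightarrow> psi K N nu f g n ss \<noteq> 0 \<Longrightarrow> dpf_supports K N T nu f g n ss"
  by (intro dpf_supports.intro dpf_axioms dpf_supports_axioms.intro)

section \<open>Marginals of the extended target\<close>

text \<open>By \<open>sum_piN_upto_snoc\<close>, these are the successive marginals of \<open>piN\<close>.\<close>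
definition piN_upto :: "nat \<Rightarrow> nat \<Rightarrow> (nat \<Rightarrow> real) \<Rightarrow> (nat list \<Rightarrow> nat \<Rightarrow> real) \<Rightarrow> (nat \<Rightarrow> nat list \<Rightarrow> real)
    \<Rightarrow> nat \<Rightarrow> nat \<Rightarrow> nat list \<Rightarrow> nat list set list \<Rightarrow> real" where
  "piN_upto K N nu f g T n x ss =
     post K nu f g T x *
     (\<Prod>k\<in>{2..n}. if take k x \<in> ss!(k-1) then 1 else 0) *
     psi K N nu f g n ss /
     (\<Prod>k\<in>{2..n}. rin K N (Wt K N nu f g ss (k-1)) (ss!(k-2)) k (take k x))"

lemma piN_eq_piN_upto: "piN K N nu f g T x ss = piN_upto K N nu f g T T x ss"
  unfolding piN_def piN_upto_def ..

lemma piN_upto_psi_zero: "psi K N nu f g n ss = 0 \<Longrightarrow> piN_upto K N nu f g T n x ss = 0"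
  unfolding piN_upto_def by simp

lemma piN_upto_snoc:
  assumes "1 \<le> n" "length ss = n"
  shows "piN_upto K N nu f g T (Suc n) x (ss @ [s]) = piN_upto K N nu f g T n x ss *
    ((if take (Suc n) x \<in> s then 1 else 0) * rn K N (Wt K N nu f g ss n) (ss!(n-1)) s /
      rin K N (Wt K N nu f g ss n) (ss!(n-1)) (Suc n) (take (Suc n) x))"
proof -
  have Wt_pre: "k \<le> n \<Longrightarrow> Wt K N nu f g (ss @ [s]) k = Wt K N nu f g ss k" for k
    using assms by (intro Wt_append) simp
  have nth_pre: "k < n \<Longrightarrow> (ss @ [s])!k = ss!k" for k using assms by (simp add: nth_append)
  have nth_n: "(ss @ [s])!n = s" using assms by (simp add: nth_append)
  have indicators: "(\<Prod>k\<in>{2..Suc n}. if take k x \<in> (ss @ [s])!(k-1) then 1 else 0)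
     = (\<Prod>k\<in>{2..n}. if take k x \<in> ss!(k-1) then (1::real) else 0) * (if take (Suc n) x \<in> s then 1 else 0)"
  proof -
    have "(\<Prod>k\<in>{2..n}. if take k x \<in> (ss @ [s])!(k-1) then (1::real) else 0) = (\<Prod>k\<in>{2..n}. if take k x \<in> ss!(k-1) then 1 else 0)"
      by (intro prod.cong refl) (auto simp: nth_pre)
    then show ?thesis using assms by (simp add: prod.cl_ivl_Suc nth_n)
  qed
  have rins: "(\<Prod>k\<in>{2..Suc n}. rin K N (Wt K N nu f g (ss @ [s]) (k-1)) ((ss @ [s])!(k-2)) k (take k x))
     = (\<Prod>k\<in>{2..n}. rin K N (Wt K N nu f g ss (k-1)) (ss!(k-2)) k (take k x)) *
       rin K N (Wt K N nu f g ss n) (ss!(n-1)) (Suc n) (take (Suc n) x)"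
  proof -
    have "(\<Prod>k\<in>{2..n}. rin K N (Wt K N nu f g (ss @ [s]) (k-1)) ((ss @ [s])!(k-2)) k (take k x))
      = (\<Prod>k\<in>{2..n}. rin K N (Wt K N nu f g ss (k-1)) (ss!(k-2)) k (take k x))"
      by (intro prod.cong refl) (auto simp: nth_pre Wt_pre)
    moreover have "Wt K N nu f g (ss @ [s]) n = Wt K N nu f g ss n" by (rule Wt_pre) simp
    moreover have "(ss @ [s])!(n-1) = ss!(n-1)" using assms by (intro nth_pre) simp
    ultimately show ?thesis using assms by (simp add: prod.cl_ivl_Suc)
  qed
  have regroup: "a * (I * i) * (p * r) / (R * q) = a * I * p / R * (i * r / q)" for a I i p r R q :: real
    by (simp add: divide_inverse inverse_mult_distrib mult_ac)
  show ?thesis unfolding piN_upto_def indicators rins psi_snoc[OF assms] by (rule regroup)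
qed

lemma rin_eq_sum_rn:
  "rin K N w s n z = (\<Sum>s'\<in>Pow (paths K n). if z \<in> s' then rn K N w s s' else 0)"
proof -
  have "{s'. s' \<subseteq> paths K n \<and> z \<in> s'} = {s'\<in>Pow (paths K n). z \<in> s'}" by auto
  moreover have "(\<Sum>s'\<in>{s'\<in>Pow (paths K n). z \<in> s'}. rn K N w s s') = (\<Sum>s'\<in>Pow (paths K n). if z \<in> s' then rn K N w s s' else 0)"
    by (rule sum.inter_filter) (simp add: finite_paths)
  ultimately show ?thesis unfolding rin_def by simp
qed

lemma piN_upto_not_mem:
  assumes "2 \<le> n" "take n x \<notin> ss!(n-1)"
  shows "piN_upto K N nu f g T n x ss = 0"
proof -
  have "(\<Prod>k\<in>{2..n}. if take k x \<in> ss!(k-1) then (1::real) else 0) = 0"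
    using assms by (intro prod_zero) auto
  then show ?thesis unfolding piN_upto_def by simp
qed

context dpf_supports
begin

lemma piN_upto_factor:
  "\<exists>\<mu>. \<forall>p\<in>paths K n. \<forall>r\<in>paths K (T-n).
     piN_upto K N nu f g T n (p @ r) ss = \<mu> * (if p \<in> ss!(n-1) then Vb K N nu f g T ss n r p else 0)"
proof -
  obtain c where c: "c > 0" and W: "\<And>z. z \<in> ss!(n-1) \<Longrightarrow>
      Wt K N nu f g ss n z = c * joint nu f g n z / keep_prod K N nu f g ss n z"
    using Wt_eq_joint[OF n_pos order_refl] by blast
  define Z where "Z = (\<Sum>u\<in>paths K T. joint nu f g T u)"
  have "Z > 0" unfolding Z_def by (rule sum_joint_pos)
  have "piN_upto K N nu f g T n (p @ r) ss
      = psi K N nu f g n ss / (c * Z) * (if p \<in> ss!(n-1) then Vb K N nu f g T ss n r p else 0)"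
    if p: "p \<in> paths K n" and r: "r \<in> paths K (T-n)" for p r
  proof (cases "p \<in> ss!(n-1)")
    case False
    have "n \<noteq> 1" using False first_support p by auto
    then show ?thesis
      using False piN_upto_not_mem[of n "p @ r"] n_pos length_paths[OF p] by simp
  next
    case True
    have len: "length p = n" using p by (rule length_paths)
    have "(\<Prod>k\<in>{2..n}. if take k (p @ r) \<in> ss!(k-1) then (1::real) else 0) = 1"
      using take_mem_support[OF True] len by (intro prod.neutral) auto
    moreover have "(\<Prod>k\<in>{2..n}. rin K N (Wt K N nu f g ss (k-1)) (ss!(k-2)) k (take k (p @ r)))
        = keep_prod K N nu f g ss n p"
      unfolding prod_rin_eq_keep_prod[OF True, symmetric] using len by (intro prod.cong refl) simp
    moreover have "keep_prod K N nu f g ss n p \<noteq> 0"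
      using W[OF True] Wt_pos[OF n_pos order_refl True] by auto
    moreover have "joint nu f g T (p @ r) =
        joint nu f g n p * pfut_x f T n (p @ r) * pfut_y g T n (p @ r)"
      using joint_eq_take_pfut[OF n_pos n_le_T] len by simp
    ultimately show ?thesis
      using True c \<open>Z > 0\<close> unfolding piN_upto_def post_def Vb_def W[OF True] Z_def[symmetric]
      by (simp add: field_simps)
  qed
  then show ?thesis by blast
qed

end

context dpf
begin

lemma sum_piN_upto_snoc:
  assumes ss: "ss \<in> Supps K n" and n: "1 \<le> n" "n < T" and x: "x \<in> paths K T"
  shows "(\<Sum>s\<in>Pow (paths K (Suc n)). piN_upto K N nu f g T (Suc n) x (ss @ [s]))
           = piN_upto K N nu f g T n x ss"
proof -
  have len: "length ss = n" using ss by (rule length_Supps)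
  define q where "q = rin K N (Wt K N nu f g ss n) (ss!(n-1)) (Suc n) (take (Suc n) x)"
  have "(\<Sum>s\<in>Pow (paths K (Suc n)). piN_upto K N nu f g T (Suc n) x (ss @ [s]))
      = piN_upto K N nu f g T n x ss * ((\<Sum>s\<in>Pow (paths K (Suc n)).
          if take (Suc n) x \<in> s then rn K N (Wt K N nu f g ss n) (ss!(n-1)) s else 0) / q)"
    unfolding piN_upto_snoc[OF n(1) len] q_def sum_divide_distrib sum_distrib_left
    by (intro sum.cong refl) simp
  also have "\<dots> = piN_upto K N nu f g T n x ss * (q / q)"
    unfolding q_def rin_eq_sum_rn ..
  also have "\<dots> = piN_upto K N nu f g T n x ss"
  proof (cases "piN_upto K N nu f g T n x ss = 0")
    case nonzero: False
    then have "psi K N nu f g n ss \<noteq> 0" using piN_upto_psi_zero by blast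
    then interpret dpf_supports K N T nu f g n ss using ss n by (intro dpf_supportsI) auto
    have "take n x \<in> ss!(n-1)"
    proof (cases "n = 1")
      case True
      then show ?thesis using first_support take_paths[OF x] n by simp
    next
      case False
      then show ?thesis using nonzero piN_upto_not_mem[of n x] n by fastforce
    qed
    moreover have "x ! n \<in> {1..K}" using x n by (intro nth_paths) auto
    moreover have "take (Suc n) x = take n x @ [x ! n]"
      using n length_paths[OF x] by (simp add: take_Suc_conv_app_nth)
    ultimately have "q = keepp N (Wt K N nu f g ss n) (ss!(n-1)) (take n x)"
      unfolding q_def using Wt_pos n
      by (simp only:) (rule rin_snoc_eq_keepp[OF N_pos finite_nth_Supps[OF ss] nth_Supps_subset[OF ss]], auto)
    moreover have "keepp N (Wt K N nu f g ss n) (ss!(n-1)) (take n x) > 0"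
      using \<open>take n x \<in> ss!(n-1)\<close> Wt_pos n
      by (intro keepp_pos N_pos finite_nth_Supps[OF ss]) auto
    ultimately show ?thesis by simp
  qed simp
  finally show ?thesis .
qed

lemma sum_piN_upto:
  assumes "1 \<le> n" "n \<le> T" "x \<in> paths K T"
  shows "(\<Sum>ss\<in>Supps K n. piN_upto K N nu f g T n x ss) = post K nu f g T x"
  using assms(1,2)
proof (induction n rule: dec_induct)
  case base
  have "Supps K 0 = {[]}" unfolding Supps_def by auto
  then have "(\<Sum>ss\<in>Supps K 1. piN_upto K N nu f g T 1 x ss)
      = (\<Sum>s\<in>Pow (paths K 1). piN_upto K N nu f g T 1 x [s])"
    using sum_Supps_Suc[where F = "piN_upto K N nu f g T 1 x" and n = 0] by simp
  also have "\<dots> = (\<Sum>s\<in>Pow (paths K 1). post K nu f g T x * (if s = paths K 1 then 1 else 0))"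
    by (simp add: piN_upto_def psi_def)
  also have "\<dots> = post K nu f g T x"
    using finite_paths[of K 1] by (simp add: sum.delta' sum_distrib_left[symmetric])
  finally show ?case .
next
  case (step n)
  then show ?case using assms(3) by (simp add: sum_Supps_Suc sum_piN_upto_snoc)
qed

end

section \<open>Backward sampling\<close>

definition extensions :: "nat \<Rightarrow> nat \<Rightarrow> nat \<Rightarrow> nat list set list \<Rightarrow> nat list set list set" where
  "extensions K T n ss0 = {ss \<in> Supps K T. take n ss = ss0}"

lemma sum_Supps_extensions:
  "m \<le> T \<Longrightarrow> (\<Sum>ss\<in>Supps K T. F ss) = (\<Sum>ss0\<in>Supps K m. \<Sum>ss\<in>extensions K T m ss0. F ss)"
  unfolding extensions_def
  by (rule sum.group[symmetric, OF finite_Supps finite_Supps]) (use take_Supps in blast)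

lemma extensions_T: "ss0 \<in> Supps K T \<Longrightarrow> extensions K T T ss0 = {ss0}"
  unfolding extensions_def using length_Supps by fastforce

lemma extensions_Suc:
  assumes ss0: "ss0 \<in> Supps K n" and n: "n < T"
  shows "extensions K T n ss0 = (\<Union>s\<in>Pow (paths K (Suc n)). extensions K T (Suc n) (ss0 @ [s]))"
proof (intro equalityI subsetI)
  fix ss assume "ss \<in> extensions K T n ss0"
  then have ss: "ss \<in> Supps K T" "take n ss = ss0" unfolding extensions_def by auto
  then have "take (Suc n) ss = ss0 @ [ss ! n]"
    using length_Supps[OF ss(1)] n by (auto simp: take_Suc_conv_app_nth)
  moreover have "ss ! n \<subseteq> paths K (Suc n)" using ss(1) n unfolding Supps_def by auto
  ultimately show "ss \<in> (\<Union>s\<in>Pow (paths K (Suc n)). extensions K T (Suc n) (ss0 @ [s]))"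
    using ss(1) unfolding extensions_def by blast
next
  fix ss assume "ss \<in> (\<Union>s\<in>Pow (paths K (Suc n)). extensions K T (Suc n) (ss0 @ [s]))"
  then obtain s where "ss \<in> Supps K T" "take (Suc n) ss = ss0 @ [s]" unfolding extensions_def by auto
  moreover have "take n ss = take n (take (Suc n) ss)" by simp
  ultimately show "ss \<in> extensions K T n ss0"
    using length_Supps[OF ss0] unfolding extensions_def by simp
qed

lemma sum_extensions_Suc:
  assumes "ss0 \<in> Supps K n" "n < T"
  shows "(\<Sum>ss\<in>extensions K T n ss0. F ss)
           = (\<Sum>s\<in>Pow (paths K (Suc n)). \<Sum>ss\<in>extensions K T (Suc n) (ss0 @ [s]). F ss)"
  unfolding extensions_Suc[OF assms]
proof (rule sum.UNION_disjoint)
  show "\<forall>s\<in>Pow (paths K (Suc n)). finite (extensions K T (Suc n) (ss0 @ [s]))"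
    unfolding extensions_def using finite_Supps by simp
  show "\<forall>s\<in>Pow (paths K (Suc n)). \<forall>s'\<in>Pow (paths K (Suc n)). s \<noteq> s' \<longrightarrow>
      extensions K T (Suc n) (ss0 @ [s]) \<inter> extensions K T (Suc n) (ss0 @ [s']) = {}"
    unfolding extensions_def by auto
qed (simp add: finite_paths)

lemma btail_Cons:
  assumes ss: "ss \<in> Supps K T" and n: "1 \<le> n" "n < T" and r: "length r = T - Suc n"
  shows "btail K N nu f g T ss (T - n) (a # r) =
    (\<Sum>z\<in>ss!n. if last z = a then bsout K N nu f g T ss (Suc n) (z @ r) else 0)"
proof (cases "T = Suc n")
  case True
  then have "T - n = Suc 0" "r = []" using r by auto
  then show ?thesis using True by (auto simp: bsout_def intro!: sum.cong)
next
  case False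
  define j where "j = T - Suc (Suc n)"
  have j: "T - n = Suc (Suc j)" "T - Suc j = Suc n" "T - Suc n = Suc j"
    using False n unfolding j_def by auto
  define V where "V = Vb K N nu f g T ss (Suc n) r"
  have len: "z \<in> ss!n \<Longrightarrow> length z = Suc n" for z
    using nth_Supps_subset[OF ss, of "Suc n"] n length_paths by auto
  have "btail K N nu f g T ss (T - n) (a # r) = btail K N nu f g T ss (Suc j) r *
      (\<Sum>z\<in>ss!n. if last z = a then V z / (\<Sum>u\<in>ss!n. V u) else 0)"
    unfolding j(1) V_def by (simp only: btail.simps Let_def j(2) list.sel diff_Suc_1)
  also have "\<dots> = (\<Sum>z\<in>ss!n. if last z = a then bsout K N nu f g T ss (Suc n) (z @ r) else 0)"
    unfolding sum_distrib_left using False j len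
    by (intro sum.cong refl) (auto simp: bsout_def Let_def V_def)
  finally show ?thesis .
qed

lemma bsout_step:
  assumes ss: "ss \<in> Supps K T" and n: "1 \<le> n" "n < T" and x: "x \<in> paths K T"
  shows "bsout K N nu f g T ss n x =
    (\<Sum>z\<in>ss!n. if last z = x ! n then bsout K N nu f g T ss (Suc n) (z @ drop (Suc n) x) else 0) *
    (if take n x \<in> ss!(n-1) then Vb K N nu f g T ss n (drop n x) (take n x) /
        (\<Sum>u\<in>ss!(n-1). Vb K N nu f g T ss n (drop n x) u) else 0)"
proof -
  have "bsout K N nu f g T ss n x = btail K N nu f g T ss (T - n) (drop n x) *
    (if take n x \<in> ss!(n-1) then Vb K N nu f g T ss n (drop n x) (take n x) /
        (\<Sum>u\<in>ss!(n-1). Vb K N nu f g T ss n (drop n x) u) else 0)"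
    using n unfolding bsout_def by (simp add: Let_def)
  moreover have "drop n x = x ! n # drop (Suc n) x"
    using n length_paths[OF x] by (simp add: Cons_nth_drop_Suc)
  moreover have "length (drop (Suc n) x) = T - Suc n" using length_paths[OF x] by simp
  ultimately show ?thesis by (simp only: btail_Cons[OF ss n])
qed

context dpf
begin

lemma sum_last_eq_sum_paths:
  assumes s: "s \<subseteq> paths K (Suc n)" and n: "1 \<le> n" and len: "length ss0 = n"
  shows "(\<Sum>z\<in>s. if last z = a then piN_upto K N nu f g T (Suc n) (z @ r) (ss0 @ [s]) else 0)
       = (\<Sum>q\<in>paths K n. piN_upto K N nu f g T (Suc n) (q @ a # r) (ss0 @ [s]))"
proof -
  define P where "P z = piN_upto K N nu f g T (Suc n) (z @ r) (ss0 @ [s])" for z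
  have "(\<Sum>q\<in>paths K n. piN_upto K N nu f g T (Suc n) (q @ a # r) (ss0 @ [s]))
      = (\<Sum>q\<in>paths K n. if q @ [a] \<in> s then P (q @ [a]) else 0)"
  proof (rule sum.cong[OF refl])
    fix q assume "q \<in> paths K n"
    then have "take (Suc n) (q @ a # r) = q @ [a]" using length_paths by simp
    then show "piN_upto K N nu f g T (Suc n) (q @ a # r) (ss0 @ [s]) =
        (if q @ [a] \<in> s then P (q @ [a]) else 0)"
      unfolding P_def by (simp add: piN_upto_snoc[OF n len])
  qed
  also have "\<dots> = (\<Sum>q\<in>{q\<in>paths K n. q @ [a] \<in> s}. P (q @ [a]))"
    by (rule sum.inter_filter[symmetric, OF finite_paths])
  also have "\<dots> = (\<Sum>z\<in>(\<lambda>q. q @ [a]) ` {q\<in>paths K n. q @ [a] \<in> s}. P z)"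
    by (rule sum.reindex[symmetric, unfolded comp_def]) (auto simp: inj_on_def)
  also have "(\<lambda>q. q @ [a]) ` {q\<in>paths K n. q @ [a] \<in> s} = {z\<in>s. last z = a}"
  proof (intro equalityI subsetI)
    fix z assume z: "z \<in> {z\<in>s. last z = a}"
    then have "z \<in> paths K (Suc n)" using s by blast
    note z_paths = butlast_paths[OF this]
    then show "z \<in> (\<lambda>q. q @ [a]) ` {q\<in>paths K n. q @ [a] \<in> s}"
      using z by (intro image_eqI[of _ _ "butlast z"]) auto
  qed auto
  also have "(\<Sum>z\<in>{z\<in>s. last z = a}. P z) = (\<Sum>z\<in>s. if last z = a then P z else 0)"
    using finite_subset[OF s finite_paths] by (rule sum.inter_filter)
  finally show ?thesis unfolding P_def ..
qed

end

text \<open>The probability that the first \<open>m\<close> supports are \<open>ss0\<close> and that the trajectory obtained at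
  step \<open>m\<close> of the backward sampler is \<open>x\<close>.\<close>
definition backward_joint :: "nat \<Rightarrow> nat \<Rightarrow> (nat \<Rightarrow> real) \<Rightarrow> (nat list \<Rightarrow> nat \<Rightarrow> real) \<Rightarrow> (nat \<Rightarrow> nat list \<Rightarrow> real)
    \<Rightarrow> nat \<Rightarrow> nat \<Rightarrow> nat list set list \<Rightarrow> nat list \<Rightarrow> real" where
  "backward_joint K N nu f g T m ss0 x =
     (\<Sum>ss\<in>extensions K T m ss0. (\<Sum>x0\<in>paths K T. piN K N nu f g T x0 ss) * bsout K N nu f g T ss m x)"

lemma backward_joint_Suc:
  assumes ss0: "ss0 \<in> Supps K n" and n: "1 \<le> n" "n < T" and x: "x \<in> paths K T"
  shows "backward_joint K N nu f g T n ss0 x =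
    (if take n x \<in> ss0!(n-1) then Vb K N nu f g T ss0 n (drop n x) (take n x) /
        (\<Sum>u\<in>ss0!(n-1). Vb K N nu f g T ss0 n (drop n x) u) else 0) *
    (\<Sum>s\<in>Pow (paths K (Suc n)). \<Sum>z\<in>s. if last z = x ! n
        then backward_joint K N nu f g T (Suc n) (ss0 @ [s]) (z @ drop (Suc n) x) else 0)"
    (is "_ = ?coef * _")
proof -
  define S where "S ss = (\<Sum>x0\<in>paths K T. piN K N nu f g T x0 ss)" for ss
  define G where "G ss z = (if last z = x ! n then S ss * bsout K N nu f g T ss (Suc n) (z @ drop (Suc n) x)
    else 0)" for ss z
  have "S ss * bsout K N nu f g T ss n x = ?coef * (\<Sum>z\<in>ss!n. G ss z)"
    if "ss \<in> extensions K T n ss0" for ss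
  proof -
    have ss: "ss \<in> Supps K T" "take n ss = ss0" using that by (auto simp: extensions_def)
    then have "Vb K N nu f g T ss n = Vb K N nu f g T ss0 n" "ss!(n-1) = ss0!(n-1)"
      using n length_Supps[OF ss(1)] by (auto simp: Vb_def Wt_take fun_eq_iff)
    then show ?thesis
      unfolding bsout_step[OF ss(1) n x] G_def
      by (simp add: sum_distrib_left if_distrib mult_ac cong: if_cong)
  qed
  then have "backward_joint K N nu f g T n ss0 x = ?coef * (\<Sum>ss\<in>extensions K T n ss0. \<Sum>z\<in>ss!n. G ss z)"
    unfolding backward_joint_def S_def[symmetric] sum_distrib_left by (rule sum.cong[OF refl])
  also have "(\<Sum>ss\<in>extensions K T n ss0. \<Sum>z\<in>ss!n. G ss z) =
      (\<Sum>s\<in>Pow (paths K (Suc n)). \<Sum>ss\<in>extensions K T (Suc n) (ss0 @ [s]). \<Sum>z\<in>s. G ss z)"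
    unfolding sum_extensions_Suc[OF ss0 n(2)]
  proof (rule sum.cong[OF refl], rule sum.cong[OF refl])
    fix s ss assume "ss \<in> extensions K T (Suc n) (ss0 @ [s])"
    then have "take (Suc n) ss = ss0 @ [s]" by (simp add: extensions_def)
    then have "ss!n = s" using length_Supps[OF ss0] by (metis lessI nth_append_length nth_take)
    then show "(\<Sum>z\<in>ss!n. G ss z) = (\<Sum>z\<in>s. G ss z)" by simp
  qed
  also have "\<dots> = (\<Sum>s\<in>Pow (paths K (Suc n)). \<Sum>z\<in>s. if last z = x ! n
        then backward_joint K N nu f g T (Suc n) (ss0 @ [s]) (z @ drop (Suc n) x) else 0)"
  proof (rule sum.cong[OF refl])
    fix s
    have "(\<Sum>ss\<in>extensions K T (Suc n) (ss0 @ [s]). \<Sum>z\<in>s. G ss z)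
        = (\<Sum>z\<in>s. \<Sum>ss\<in>extensions K T (Suc n) (ss0 @ [s]). G ss z)"
      by (rule sum.swap)
    also have "\<dots> = (\<Sum>z\<in>s. if last z = x ! n
        then backward_joint K N nu f g T (Suc n) (ss0 @ [s]) (z @ drop (Suc n) x) else 0)"
      unfolding backward_joint_def G_def S_def by (intro sum.cong refl) auto
    finally show "(\<Sum>ss\<in>extensions K T (Suc n) (ss0 @ [s]). \<Sum>z\<in>s. G ss z) = \<dots>" .
  qed
  finally show ?thesis .
qed

lemma sum_if_mem_subset: "finite A \<Longrightarrow> B \<subseteq> A \<Longrightarrow> (\<Sum>x\<in>A. if x \<in> B then h x else 0) = sum h B"
  by (simp add: sum.inter_restrict[symmetric] Int_absorb1)

lemma normalised_times_sum:
  fixes V :: "'a \<Rightarrow> real"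
  assumes "finite A" "\<And>q. q \<in> A \<Longrightarrow> 0 \<le> V q"
  shows "(if p \<in> A then V p / (\<Sum>u\<in>A. V u) else 0) * (\<Sum>u\<in>A. V u) = (if p \<in> A then V p else 0)"
  using assms sum_nonneg_eq_0_iff[of A V] by auto

context dpf
begin

lemma backward_joint_T:
  assumes ss0: "ss0 \<in> Supps K T" and x: "x \<in> paths K T"
  shows "backward_joint K N nu f g T T ss0 x = piN_upto K N nu f g T T x ss0"
proof (cases "psi K N nu f g T ss0 = 0")
  case False
  then interpret dpf_supports K N T nu f g T ss0 using ss0 T_pos by (intro dpf_supportsI) auto
  obtain \<mu> where \<mu>: "\<And>p. p \<in> paths K T \<Longrightarrow>
      piN_upto K N nu f g T T p ss0 = \<mu> * (if p \<in> ss0!(T-1) then Wt K N nu f g ss0 T p else 0)"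
    using piN_upto_factor by (force simp: Vb_def pfut_x_def pfut_y_def paths_def)
  have "(\<Sum>x0\<in>paths K T. piN_upto K N nu f g T T x0 ss0) = \<mu> * (\<Sum>p\<in>ss0!(T-1). Wt K N nu f g ss0 T p)"
    using nth_Supps_subset[OF ss0 T_pos order_refl]
    by (simp add: \<mu> sum_distrib_left[symmetric] sum_if_mem_subset[OF finite_paths])
  then show ?thesis
    using sum_Wt_eq_1 \<mu>[OF x]
    by (auto simp: backward_joint_def extensions_T[OF ss0] piN_eq_piN_upto bsout_def)
qed (simp add: backward_joint_def extensions_T[OF ss0] piN_eq_piN_upto piN_upto_psi_zero)

lemma sum_backward_joint_Suc:
  assumes ss0: "ss0 \<in> Supps K n" and n: "1 \<le> n" "n < T" and x: "x \<in> paths K T"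
    and IH: "\<And>ss1 y. ss1 \<in> Supps K (Suc n) \<Longrightarrow> y \<in> paths K T \<Longrightarrow>
               backward_joint K N nu f g T (Suc n) ss1 y = piN_upto K N nu f g T (Suc n) y ss1"
  shows "(\<Sum>s\<in>Pow (paths K (Suc n)). \<Sum>z\<in>s. if last z = x ! n
            then backward_joint K N nu f g T (Suc n) (ss0 @ [s]) (z @ drop (Suc n) x) else 0)
         = (\<Sum>q\<in>paths K n. piN_upto K N nu f g T n (q @ drop n x) ss0)"
proof -
  define r where "r = drop n x"
  have r: "r = x ! n # drop (Suc n) x" "r \<in> paths K (T - n)"
    using n x length_paths[OF x] unfolding r_def by (auto simp: Cons_nth_drop_Suc drop_paths)
  have "(\<Sum>z\<in>s. if last z = x ! n
          then backward_joint K N nu f g T (Suc n) (ss0 @ [s]) (z @ drop (Suc n) x) else 0)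
      = (\<Sum>q\<in>paths K n. piN_upto K N nu f g T (Suc n) (q @ r) (ss0 @ [s]))"
    if s: "s \<subseteq> paths K (Suc n)" for s
  proof -
    have "ss0 @ [s] \<in> Supps K (Suc n)" using s ss0 snoc_Supps_iff by blast
    moreover have "z @ drop (Suc n) x \<in> paths K T" if "z \<in> s" for z
      using that s append_paths drop_paths[OF x, of "Suc n"] n by fastforce
    ultimately have "(\<Sum>z\<in>s. if last z = x ! n
          then backward_joint K N nu f g T (Suc n) (ss0 @ [s]) (z @ drop (Suc n) x) else 0)
        = (\<Sum>z\<in>s. if last z = x ! n
          then piN_upto K N nu f g T (Suc n) (z @ drop (Suc n) x) (ss0 @ [s]) else 0)"
      using IH by (intro sum.cong refl) simp
    also have "\<dots> = (\<Sum>q\<in>paths K n. piN_upto K N nu f g T (Suc n) (q @ r) (ss0 @ [s]))"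
      unfolding r(1) using s n length_Supps[OF ss0] by (intro sum_last_eq_sum_paths) auto
    finally show ?thesis .
  qed
  then have "(\<Sum>s\<in>Pow (paths K (Suc n)). \<Sum>z\<in>s. if last z = x ! n
        then backward_joint K N nu f g T (Suc n) (ss0 @ [s]) (z @ drop (Suc n) x) else 0)
      = (\<Sum>s\<in>Pow (paths K (Suc n)). \<Sum>q\<in>paths K n. piN_upto K N nu f g T (Suc n) (q @ r) (ss0 @ [s]))"
    by (rule sum.cong[OF refl]) auto
  also have "\<dots> = (\<Sum>q\<in>paths K n. \<Sum>s\<in>Pow (paths K (Suc n)). piN_upto K N nu f g T (Suc n) (q @ r) (ss0 @ [s]))"
    by (rule sum.swap)
  also have "\<dots> = (\<Sum>q\<in>paths K n. piN_upto K N nu f g T n (q @ r) ss0)"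
    using append_paths[OF _ r(2)] n by (intro sum.cong refl sum_piN_upto_snoc[OF ss0 n]) fastforce+
  finally show ?thesis unfolding r_def .
qed

lemma backward_weight_times_sum_piN_upto:
  assumes ss0: "ss0 \<in> Supps K n" and n: "1 \<le> n" "n \<le> T" and x: "x \<in> paths K T"
  shows "(if take n x \<in> ss0!(n-1) then Vb K N nu f g T ss0 n (drop n x) (take n x) /
            (\<Sum>u\<in>ss0!(n-1). Vb K N nu f g T ss0 n (drop n x) u) else 0) *
         (\<Sum>q\<in>paths K n. piN_upto K N nu f g T n (q @ drop n x) ss0) = piN_upto K N nu f g T n x ss0"
proof (cases "psi K N nu f g n ss0 = 0")
  case False
  then interpret dpf_supports K N T nu f g n ss0 using ss0 n by (intro dpf_supportsI) auto
  define V where "V = Vb K N nu f g T ss0 n (drop n x)"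
  have r: "drop n x \<in> paths K (T - n)" using x n by (intro drop_paths)
  obtain \<mu> where \<mu>: "\<And>p. p \<in> paths K n \<Longrightarrow>
      piN_upto K N nu f g T n (p @ drop n x) ss0 = \<mu> * (if p \<in> ss0!(n-1) then V p else 0)"
    using piN_upto_factor r unfolding V_def by blast
  have "(\<Sum>q\<in>paths K n. piN_upto K N nu f g T n (q @ drop n x) ss0) = \<mu> * sum V (ss0!(n-1))"
    using nth_Supps_subset[OF ss0 n(1) order_refl]
    by (simp add: \<mu> sum_distrib_left[symmetric] sum_if_mem_subset[OF finite_paths])
  moreover have "V q \<ge> 0" if "q \<in> ss0!(n-1)" for q
    using Vb_nonneg[OF that r] unfolding V_def .
  moreover have "take n x \<in> paths K n" using take_paths x n by simp
  ultimately show ?thesis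
    using \<mu>[of "take n x"] normalised_times_sum[OF finite_nth_Supps[OF ss0 n(1) order_refl], of V]
    unfolding V_def[symmetric] by (simp add: mult_ac)
qed (simp add: piN_upto_psi_zero)

lemma backward_joint_eq_piN_upto:
  assumes "1 \<le> m" "m \<le> T" "ss0 \<in> Supps K m" "x \<in> paths K T"
  shows "backward_joint K N nu f g T m ss0 x = piN_upto K N nu f g T m x ss0"
  using assms(2,3,4)
proof (induction m arbitrary: ss0 x rule: inc_induct)
  case base
  then show ?case by (rule backward_joint_T)
next
  case (step n)
  have n: "1 \<le> n" "n < T" using step.hyps assms(1) by auto
  show ?case
    using backward_joint_Suc[OF step.prems(1) n step.prems(2)]
      sum_backward_joint_Suc[OF step.prems(1) n step.prems(2) step.IH]
      backward_weight_times_sum_piN_upto[OF step.prems(1) n(1) _ step.prems(2)] n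
    by simp
qed

theorem backward_sampling_marginal:
  assumes "1 \<le> m" "m \<le> T" "x \<in> paths K T"
  shows "(\<Sum>ss\<in>Supps K T. \<Sum>x0\<in>paths K T. piN K N nu f g T x0 ss * bsout K N nu f g T ss m x)
           = post K nu f g T x"
proof -
  have "(\<Sum>ss\<in>Supps K T. \<Sum>x0\<in>paths K T. piN K N nu f g T x0 ss * bsout K N nu f g T ss m x)
      = (\<Sum>ss0\<in>Supps K m. backward_joint K N nu f g T m ss0 x)"
    unfolding backward_joint_def sum_distrib_right[symmetric] by (rule sum_Supps_extensions[OF assms(2)])
  also have "\<dots> = (\<Sum>ss0\<in>Supps K m. piN_upto K N nu f g T m x ss0)"
    using assms by (intro sum.cong refl backward_joint_eq_piN_upto) auto
  also have "\<dots> = post K nu f g T x" using assms by (rule sum_piN_upto)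
  finally show ?thesis .
qed

end

theorem proposition1:
  fixes K N T m :: nat
    and nu :: "nat \<Rightarrow> real"
    and f :: "nat list \<Rightarrow> nat \<Rightarrow> real"
    and g :: "nat \<Rightarrow> nat list \<Rightarrow> real"
    and x :: "nat list"
  assumes "K \<ge> 1" and "T \<ge> 1" and "N \<ge> 2"
    and nu_nonneg: "\<And>a. a \<in> {1..K} \<Longrightarrow> nu a \<ge> 0"
    and nu_sum: "(\<Sum>a\<in>{1..K}. nu a) = 1"
    and f_nonneg: "\<And>xs n a. xs \<in> paths K n \<Longrightarrow> 1 \<le> n \<Longrightarrow> n < T \<Longrightarrow> a \<in> {1..K} \<Longrightarrow> f xs a \<ge> 0"
    and f_sum: "\<And>xs n. xs \<in> paths K n \<Longrightarrow> 1 \<le> n \<Longrightarrow> n < T \<Longrightarrow> (\<Sum>a\<in>{1..K}. f xs a) = 1"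
    and g_nonneg: "\<And>xs n. xs \<in> paths K n \<Longrightarrow> 1 \<le> n \<Longrightarrow> n \<le> T \<Longrightarrow> g n xs \<ge> 0"
    and support: "\<And>xs n. xs \<in> paths K n \<Longrightarrow> 1 \<le> n \<Longrightarrow> n \<le> T \<Longrightarrow> joint nu f g n xs > 0"
    and "m \<in> {1..T}"
    and "x \<in> paths K T"
  shows "(\<Sum>ss\<in>Supps K T. \<Sum>x0\<in>paths K T.
            piN K N nu f g T x0 ss * bsout K N nu f g T ss m x)
         = post K nu f g T x"
proof -
  interpret dpf K N T nu f g
    using assms by unfold_locales auto
  show ?thesis using assms by (intro backward_sampling_marginal) auto
qed

end
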